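(* Let $(X,d)$ be a Polish metric space, let $1\le p<\infty$, and let $\{m_x\}_{x\in X}$ be a random walk on $X$ with $m_x\in\mathcal{P}_p(X)$ for every $x\in X$. Define $\tilde m:\mathcal{P}_p(X)\to\mathcal{P}(\mathcal{P}_p(X))$ by $$\int_{\mathcal{P}_p(X)} f(\sigma)\,\tilde m_\mu(d\sigma)=\int_X f(m_x)\,\mu(dx)\qquad\text{for all } f\in\mathcal{C}_b(\mathcal{P}_p(X)),$$ i.e. $\tilde m_\mu$ is the push-forward of $\mu$ under $x\mapsto m_x$. Then $\{\tilde m_\mu\}_{\mu\in\mathcal{P}_p(X)}$ is a random walk on the metric space $(\mathcal{P}_p(X),W_p)$ and $$\inf_{x,y\in X,\ x\neq y}\kappa^m_p(x,y)=\inf_{\mu,\nu\in\mathcal{P}_p(X),\ \mu\ne\nu}\kappa^{\tilde m}_p(\mu,\nu),$$ where, if one side is $-\infty$, so is the other.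
   Context: A random walk on a metric space $Y$ is a family $\{m_y\}_{y\in Y}$ of Borel probability measures on $Y$. $\mathcal{P}(Y)$ denotes the Borel probability measures on $Y$ with the weak topology. For $1\le p<\infty$, $\mathcal{P}_p(Y)=\{\mu\in\mathcal{P}(Y): \int d(o,y)^p\,\mu(dy)<\infty \text{ for some } o\in Y\}$, and the $L^p$-Wasserstein distance is $W_p(\mu,\nu)=\inf_{\pi}\big(\int d(x,y)^p\,\pi(dx,dy)\big)^{1/p}$, the infimum over couplings $\pi$ of $\mu$ and $\nu$ (probability measures on $Y\times Y$ with marginals $\mu,\nu$). $(\mathcal{P}_p(Y),W_p)$ is a Polish metric space when $Y$ is. For a random walk $\{m_y\}$ on $Y$ and distinct $x,y\in Y$, the $p$-coarse Ricci curvature is $\kappa^m_p(x,y)=1-W_p(m_x,m_y)/d(x,y)$. $\mathcal{C}_b$ denotes bounded continuous functions. *)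

theory Defs
  imports "HOL-Analysis.Analysis" "HOL-Probability.Probability"
begin

definition borel_of :: "'a topology \<Rightarrow> 'a measure" where
  "borel_of T = sigma (topspace T) {U. openin T U}"

definition mborel :: "'a set \<Rightarrow> ('a \<Rightarrow> 'a \<Rightarrow> real) \<Rightarrow> 'a measure" where
  "mborel M d = borel_of (Metric_space.mtopology M d)"

definition Pp :: "real \<Rightarrow> 'a set \<Rightarrow> ('a \<Rightarrow> 'a \<Rightarrow> real) \<Rightarrow> 'a measure set" where
  "Pp p M d = {\<mu>. prob_space \<mu> \<and> sets \<mu> = sets (mborel M d) \<and>
      (\<exists>z\<in>M. (\<integral>\<^sup>+ y. ennreal (d z y powr p) \<partial>\<mu>) < \<infinity>)}"

definition couplings :: "'a set \<Rightarrow> ('a \<Rightarrow> 'a \<Rightarrow> real) \<Rightarrow> 'a measure \<Rightarrow> 'a measure \<Rightarrow> ('a \<times> 'a) measure set" where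
  "couplings M d \<mu> \<nu> = {\<pi>. sets \<pi> = sets (mborel M d \<Otimes>\<^sub>M mborel M d) \<and>
      distr \<pi> (mborel M d) fst = \<mu> \<and> distr \<pi> (mborel M d) snd = \<nu>}"

definition wcost :: "real \<Rightarrow> 'a set \<Rightarrow> ('a \<Rightarrow> 'a \<Rightarrow> real) \<Rightarrow> 'a measure \<Rightarrow> 'a measure \<Rightarrow> ennreal" where
  "wcost p M d \<mu> \<nu> = (INF \<pi>\<in>couplings M d \<mu> \<nu>. \<integral>\<^sup>+ z. ennreal (d (fst z) (snd z) powr p) \<partial>\<pi>)"

definition wass_e :: "real \<Rightarrow> 'a set \<Rightarrow> ('a \<Rightarrow> 'a \<Rightarrow> real) \<Rightarrow> 'a measure \<Rightarrow> 'a measure \<Rightarrow> ereal" where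
  "wass_e p M d \<mu> \<nu> = (if wcost p M d \<mu> \<nu> = \<infinity> then \<infinity>
      else ereal (enn2real (wcost p M d \<mu> \<nu>) powr (1 / p)))"

text \<open>Real-valued W_p (finite on P_p), used as the metric on P_p.\<close>
definition wass :: "real \<Rightarrow> 'a set \<Rightarrow> ('a \<Rightarrow> 'a \<Rightarrow> real) \<Rightarrow> 'a measure \<Rightarrow> 'a measure \<Rightarrow> real" where
  "wass p M d \<mu> \<nu> = real_of_ereal (wass_e p M d \<mu> \<nu>)"

definition kappa :: "real \<Rightarrow> 'a set \<Rightarrow> ('a \<Rightarrow> 'a \<Rightarrow> real) \<Rightarrow> ('a \<Rightarrow> 'a measure) \<Rightarrow> 'a \<Rightarrow> 'a \<Rightarrow> ereal" where
  "kappa p M d m x y = 1 - wass_e p M d (m x) (m y) / ereal (d x y)"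

definition lift_walk :: "real \<Rightarrow> ('a::metric_space \<Rightarrow> 'a measure) \<Rightarrow> 'a measure \<Rightarrow> 'a measure measure" where
  "lift_walk p m \<mu> = distr \<mu> (mborel (Pp p UNIV dist) (wass p UNIV dist)) m"

end

theory Submission
  imports Defs
begin

text \<open>The Dirac embedding \<open>x \<mapsto> \<delta>\<^sub>x\<close> is an isometry of \<open>X\<close> into \<open>(P\<^sub>p(X), W\<^sub>p)\<close> which
  intertwines \<open>m\<close> with the lifted walk, so every curvature value of \<open>m\<close> is also one of the lifted
  walk. Conversely, a curvature lower bound \<open>k\<close> for \<open>m\<close> says that \<open>x \<mapsto> m\<^sub>x\<close> is
  \<open>(1 - k)\<close>-Lipschitz into \<open>(P\<^sub>p(X), W\<^sub>p)\<close>; pushing a near-optimal coupling of \<open>\<mu>\<close> and \<open>\<nu>\<close>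
  forward along \<open>(x, y) \<mapsto> (m\<^sub>x, m\<^sub>y)\<close> shows that the lifted walk is \<open>(1 - k)\<close>-Lipschitz as
  well, i.e. has curvature at least \<open>k\<close>.

  The Borel structure of \<open>P\<^sub>p(X)\<close> is that of the metric topology of \<open>W\<^sub>p\<close>, so \<open>W\<^sub>p\<close> must be
  shown to be a metric. It separates points because a small transport cost forces
  \<open>\<mu>(F) \<le> \<nu>(F\<^sub>\<delta>) + o(1)\<close> for closed \<open>F\<close>; the triangle inequality follows by gluing two
  couplings along a countable partition of \<open>X\<close> into cells of small diameter, which replaces the
  disintegration used in the usual gluing lemma.\<close>

section \<open>Borel spaces and couplings\<close>

lemma mborel_UNIV: "mborel UNIV dist = (borel :: 'a::metric_space measure)"
  unfolding mborel_def borel_of_def borel_def by simp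

context Metric_space
begin

lemma opens_subset_Pow: "Collect (openin mtopology) \<subseteq> Pow M"
  using openin_subset by fastforce

lemma space_mborel: "space (mborel M d) = M"
  unfolding mborel_def borel_of_def topspace_mtopology
  by (rule space_measure_of[OF opens_subset_Pow])

lemma sets_mborel: "sets (mborel M d) = sigma_sets M {U. openin mtopology U}"
  unfolding mborel_def borel_of_def topspace_mtopology
  using sets_measure_of[OF opens_subset_Pow] by simp

lemma singleton_mborel: "a \<in> M \<Longrightarrow> {a} \<in> sets (mborel M d)"
proof -
  assume a: "a \<in> M"
  have "mcball a 0 = {a}" using a by (auto simp: mcball_def) (metis antisym nonneg zero)
  then have "openin mtopology (M - {a})" using closedin_mcball[of a 0] by (simp add: closedin_def)
  hence "M - (M - {a}) \<in> sigma_sets M {U. openin mtopology U}"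
    by (intro sigma_sets.Compl sigma_sets.Basic) auto
  with a show ?thesis by (simp add: sets_mborel Diff_Diff_Int Int_absorb1)
qed

end

text \<open>No measurability of \<open>g\<close> is required: it is applied to \<open>W\<^sub>p\<close> on the product of two copies of
  \<open>P\<^sub>p(X)\<close>, whose measurability is not available.\<close>

lemma nn_integral_distr_le:
  assumes T: "T \<in> measurable M N"
  shows "(\<integral>\<^sup>+ y. g y \<partial>distr M N T) \<le> (\<integral>\<^sup>+ x. g (T x) \<partial>M)"
proof -
  have "(\<integral>\<^sup>+ y. g y \<partial>distr M N T) = (SUP s \<in> {s. simple_function (distr M N T) s \<and> s \<le> g}. integral\<^sup>S (distr M N T) s)"
    by (rule nn_integral_def)
  also have "\<dots> \<le> (\<integral>\<^sup>+ x. g (T x) \<partial>M)"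
  proof (rule SUP_least)
    fix s assume s: "s \<in> {s. simple_function (distr M N T) s \<and> s \<le> g}"
    then have "integral\<^sup>S (distr M N T) s = integral\<^sup>N (distr M N T) s"
      by (simp add: nn_integral_eq_simple_integral)
    also have "\<dots> = (\<integral>\<^sup>+ x. s (T x) \<partial>M)"
      using s by (intro nn_integral_distr[OF T] borel_measurable_simple_function) auto
    also have "\<dots> \<le> (\<integral>\<^sup>+ x. g (T x) \<partial>M)" using s by (auto intro!: nn_integral_mono simp: le_fun_def)
    finally show "integral\<^sup>S (distr M N T) s \<le> (\<integral>\<^sup>+ x. g (T x) \<partial>M)" .
  qed
  finally show ?thesis .
qed

lemma PpD:
  fixes \<mu> :: "'a::metric_space measure"
  assumes "\<mu> \<in> Pp p UNIV dist"
  shows "prob_space \<mu>" "sets \<mu> = sets borel" "space \<mu> = UNIV"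
    and "\<exists>z. (\<integral>\<^sup>+ y. ennreal (dist z y powr p) \<partial>\<mu>) < \<infinity>"
  using assms by (auto simp: Pp_def mborel_UNIV dest: sets_eq_imp_space_eq)

lemma couplings_UNIV: "couplings UNIV dist \<mu> \<nu> = {\<pi>. sets \<pi> = sets (borel \<Otimes>\<^sub>M borel) \<and>
      distr \<pi> borel fst = \<mu> \<and> distr \<pi> borel snd = (\<nu> :: 'a::metric_space measure)}"
  by (simp add: couplings_def mborel_UNIV)

lemma couplingsD:
  fixes \<mu> \<nu> :: "'a::polish_space measure"
  assumes "\<pi> \<in> couplings UNIV dist \<mu> \<nu>"
  shows "sets \<pi> = sets (borel \<Otimes>\<^sub>M borel)" "sets \<pi> = sets borel" "space \<pi> = UNIV"
    "distr \<pi> borel fst = \<mu>" "distr \<pi> borel snd = \<nu>"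
proof -
  have a: "sets \<pi> = sets (borel \<Otimes>\<^sub>M borel)" "distr \<pi> borel fst = \<mu>" "distr \<pi> borel snd = \<nu>"
    using assms unfolding couplings_UNIV by auto
  have b: "sets \<pi> = sets borel" using a(1) by (simp only: borel_prod)
  then show "sets \<pi> = sets (borel \<Otimes>\<^sub>M borel)" "sets \<pi> = sets borel" "space \<pi> = UNIV"
    "distr \<pi> borel fst = \<mu>" "distr \<pi> borel snd = \<nu>" using a sets_eq_imp_space_eq[OF b] by auto
qed

lemma measurable_coupling:
  fixes \<mu> \<nu> :: "'a::polish_space measure"
  assumes "\<pi> \<in> couplings UNIV dist \<mu> \<nu>" "f \<in> measurable (borel \<Otimes>\<^sub>M borel) N"
  shows "f \<in> measurable \<pi> N"
  using assms(2) measurable_cong_sets[OF couplingsD(1)[OF assms(1)] refl, of N] by simp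

lemma nn_integral_coupling_fst:
  fixes \<mu> \<nu> :: "'a::polish_space measure"
  assumes "\<pi> \<in> couplings UNIV dist \<mu> \<nu>" "g \<in> borel_measurable borel"
  shows "(\<integral>\<^sup>+ z. g (fst z) \<partial>\<pi>) = (\<integral>\<^sup>+ x. g x \<partial>\<mu>)"
  using couplingsD(4)[OF assms(1)]
  by (auto intro!: nn_integral_distr[symmetric] measurable_coupling[OF assms(1)] simp: assms(2))

lemma nn_integral_coupling_snd:
  fixes \<mu> \<nu> :: "'a::polish_space measure"
  assumes "\<pi> \<in> couplings UNIV dist \<mu> \<nu>" "g \<in> borel_measurable borel"
  shows "(\<integral>\<^sup>+ z. g (snd z) \<partial>\<pi>) = (\<integral>\<^sup>+ x. g x \<partial>\<nu>)"
  using couplingsD(5)[OF assms(1)]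
  by (auto intro!: nn_integral_distr[symmetric] measurable_coupling[OF assms(1)] simp: assms(2))

lemma measure_coupling_Times:
  fixes \<mu> \<nu> :: "'a::polish_space measure"
  assumes \<pi>: "\<pi> \<in> couplings UNIV dist \<mu> \<nu>" and A: "A \<in> sets borel"
  shows "measure \<mu> A = measure \<pi> (A \<times> UNIV)" "measure \<nu> A = measure \<pi> (UNIV \<times> A)"
proof -
  have "measure \<mu> A = measure \<pi> (fst -` A \<inter> space \<pi>)"
    using couplingsD(4)[OF \<pi>] by (auto intro!: measure_distr measurable_coupling[OF \<pi>] A)
  also have "fst -` A \<inter> space \<pi> = A \<times> UNIV" using couplingsD(3)[OF \<pi>] by auto
  finally show "measure \<mu> A = measure \<pi> (A \<times> UNIV)" .
  have "measure \<nu> A = measure \<pi> (snd -` A \<inter> space \<pi>)"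
    using couplingsD(5)[OF \<pi>] by (auto intro!: measure_distr measurable_coupling[OF \<pi>] A)
  also have "snd -` A \<inter> space \<pi> = UNIV \<times> A" using couplingsD(3)[OF \<pi>] by auto
  finally show "measure \<nu> A = measure \<pi> (UNIV \<times> A)" .
qed

lemma prob_space_coupling:
  fixes \<mu> \<nu> :: "'a::polish_space measure"
  assumes \<pi>: "\<pi> \<in> couplings UNIV dist \<mu> \<nu>" and \<mu>: "prob_space \<mu>"
  shows "prob_space \<pi>"
proof (rule prob_spaceI)
  have "emeasure \<pi> (space \<pi>) = emeasure (distr \<pi> borel fst) UNIV"
    by (subst emeasure_distr) (auto intro: measurable_coupling[OF \<pi>] simp: couplingsD(3)[OF \<pi>])
  also have "\<dots> = 1"
    using couplingsD(4)[OF \<pi>] prob_space.emeasure_space_1[OF \<mu>] by (metis space_borel space_distr)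
  finally show "emeasure \<pi> (space \<pi>) = 1" .
qed

lemma pair_measure_in_couplings:
  fixes \<mu> \<nu> :: "'a::polish_space measure"
  assumes \<mu>: "prob_space \<mu>" "sets \<mu> = sets borel" and \<nu>: "prob_space \<nu>" "sets \<nu> = sets borel"
  shows "\<mu> \<Otimes>\<^sub>M \<nu> \<in> couplings UNIV dist \<mu> \<nu>"
proof -
  interpret M: prob_space \<mu> by (rule \<mu>(1))
  interpret N: prob_space \<nu> by (rule \<nu>(1))
  interpret pair_prob_space \<mu> \<nu> ..
  have sp: "space \<mu> = UNIV" "space \<nu> = UNIV"
    using sets_eq_imp_space_eq[OF \<mu>(2)] sets_eq_imp_space_eq[OF \<nu>(2)] by simp_all
  have s: "sets (\<mu> \<Otimes>\<^sub>M \<nu>) = sets (borel \<Otimes>\<^sub>M borel)"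
    by (rule sets_pair_measure_cong) (simp_all add: \<mu>(2) \<nu>(2))
  have "distr (\<mu> \<Otimes>\<^sub>M \<nu>) borel fst = \<mu>"
  proof (rule measure_eqI)
    fix A assume A: "A \<in> sets (distr (\<mu> \<Otimes>\<^sub>M \<nu>) borel fst)"
    hence A': "A \<in> sets \<mu>" by (simp add: \<mu>(2))
    have "fst -` A \<inter> space (\<mu> \<Otimes>\<^sub>M \<nu>) = A \<times> space \<nu>" by (auto simp: space_pair_measure sp)
    then show "emeasure (distr (\<mu> \<Otimes>\<^sub>M \<nu>) borel fst) A = emeasure \<mu> A"
      using A A' N.emeasure_pair_measure_Times[OF A' sets.top[of \<nu>]] N.emeasure_space_1
      by (subst emeasure_distr) (auto simp: measurable_cong_sets[OF s refl])
  qed (simp add: \<mu>(2))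
  moreover have "distr (\<mu> \<Otimes>\<^sub>M \<nu>) borel snd = \<nu>"
  proof (rule measure_eqI)
    fix A assume A: "A \<in> sets (distr (\<mu> \<Otimes>\<^sub>M \<nu>) borel snd)"
    hence A': "A \<in> sets \<nu>" by (simp add: \<nu>(2))
    have "snd -` A \<inter> space (\<mu> \<Otimes>\<^sub>M \<nu>) = space \<mu> \<times> A" by (auto simp: space_pair_measure sp)
    then show "emeasure (distr (\<mu> \<Otimes>\<^sub>M \<nu>) borel snd) A = emeasure \<nu> A"
      using A A' N.emeasure_pair_measure_Times[OF sets.top[of \<mu>] A'] M.emeasure_space_1
      by (subst emeasure_distr) (auto simp: measurable_cong_sets[OF s refl])
  qed (simp add: \<nu>(2))
  ultimately show ?thesis using s by (simp add: couplings_UNIV)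
qed

lemma powr_add3_le:
  fixes a b c p :: real
  assumes "0 \<le> a" "0 \<le> b" "0 \<le> c" "0 < p"
  shows "(a + b + c) powr p \<le> 3 powr p * (a powr p + b powr p + c powr p)"
proof -
  define m where "m = max a (max b c)"
  have "(a + b + c) powr p \<le> (3 * m) powr p" using assms unfolding m_def by (intro powr_mono2) auto
  also have "\<dots> = 3 powr p * m powr p" using assms unfolding m_def by (subst powr_mult) auto
  also have "m powr p \<le> a powr p + b powr p + c powr p"
    using powr_ge_zero[of a p] powr_ge_zero[of b p] powr_ge_zero[of c p] unfolding m_def
    by (smt (verit))
  finally show ?thesis by simp
qed

lemma coupling_cost_finite:
  fixes \<mu> \<nu> :: "'a::polish_space measure"
  assumes \<pi>: "\<pi> \<in> couplings UNIV dist \<mu> \<nu>" and \<mu>: "\<mu> \<in> Pp p UNIV dist" and \<nu>: "\<nu> \<in> Pp p UNIV dist"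
    and p: "0 < p"
  shows "(\<integral>\<^sup>+ z. ennreal (dist (fst z) (snd z) powr p) \<partial>\<pi>) < \<infinity>"
proof -
  obtain z1 where z1: "(\<integral>\<^sup>+ y. ennreal (dist z1 y powr p) \<partial>\<mu>) < \<infinity>" using PpD(4)[OF \<mu>] by blast
  obtain z2 where z2: "(\<integral>\<^sup>+ y. ennreal (dist z2 y powr p) \<partial>\<nu>) < \<infinity>" using PpD(4)[OF \<nu>] by blast
  interpret prob_space \<pi> by (rule prob_space_coupling[OF \<pi> PpD(1)[OF \<mu>]])
  have m1: "(\<lambda>z. ennreal (dist z1 (fst z) powr p)) \<in> borel_measurable \<pi>"
    by (rule measurable_coupling[OF \<pi>]) measurable
  have m2: "(\<lambda>z. ennreal (dist z2 (snd z) powr p)) \<in> borel_measurable \<pi>"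
    by (rule measurable_coupling[OF \<pi>]) measurable
  have "(\<integral>\<^sup>+ z. ennreal (dist (fst z) (snd z) powr p) \<partial>\<pi>) \<le>
     (\<integral>\<^sup>+ z. ennreal (3 powr p) * ((ennreal (dist z1 (fst z) powr p) + ennreal (dist z1 z2 powr p))
       + ennreal (dist z2 (snd z) powr p)) \<partial>\<pi>)"
  proof (rule nn_integral_mono)
    fix z :: "'a \<times> 'a"
    have "dist (fst z) (snd z) \<le> dist z1 (fst z) + dist z1 z2 + dist z2 (snd z)"
      using dist_triangle[of "fst z" "snd z" z1] dist_triangle[of z1 "snd z" z2] dist_commute[of "fst z" z1]
      by linarith
    hence "dist (fst z) (snd z) powr p \<le> (dist z1 (fst z) + dist z1 z2 + dist z2 (snd z)) powr p"
      using p by (intro powr_mono2) auto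
    also have "\<dots> \<le> 3 powr p * (dist z1 (fst z) powr p + dist z1 z2 powr p + dist z2 (snd z) powr p)"
      using p by (intro powr_add3_le) auto
    finally show "ennreal (dist (fst z) (snd z) powr p) \<le> ennreal (3 powr p) * ((ennreal (dist z1 (fst z) powr p)
        + ennreal (dist z1 z2 powr p)) + ennreal (dist z2 (snd z) powr p))"
      by (simp add: ennreal_mult[symmetric] ennreal_plus[symmetric] del: ennreal_plus)
  qed
  also have "\<dots> = ennreal (3 powr p) * (((\<integral>\<^sup>+ y. ennreal (dist z1 y powr p) \<partial>\<mu>) + ennreal (dist z1 z2 powr p))
      + (\<integral>\<^sup>+ y. ennreal (dist z2 y powr p) \<partial>\<nu>))"
    using m1 m2
    by (simp add: nn_integral_cmult nn_integral_add emeasure_space_1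
        nn_integral_coupling_fst[OF \<pi>, of "\<lambda>y. ennreal (dist z1 y powr p)"]
        nn_integral_coupling_snd[OF \<pi>, of "\<lambda>y. ennreal (dist z2 y powr p)"])
  also have "\<dots> < \<infinity>" using z1 z2 by (simp add: ennreal_mult_less_top)
  finally show ?thesis .
qed

lemma wcost_finite:
  fixes \<mu> \<nu> :: "'a::polish_space measure"
  assumes \<mu>: "\<mu> \<in> Pp p UNIV dist" and \<nu>: "\<nu> \<in> Pp p UNIV dist" and p: "0 < p"
  shows "wcost p UNIV dist \<mu> \<nu> < \<infinity>"
proof -
  have \<pi>: "\<mu> \<Otimes>\<^sub>M \<nu> \<in> couplings UNIV dist \<mu> \<nu>"
    using PpD[OF \<mu>] PpD[OF \<nu>] by (intro pair_measure_in_couplings)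
  have "wcost p UNIV dist \<mu> \<nu> \<le> (\<integral>\<^sup>+ z. ennreal (dist (fst z) (snd z) powr p) \<partial>(\<mu> \<Otimes>\<^sub>M \<nu>))"
    unfolding wcost_def using \<pi> by (rule INF_lower)
  also have "\<dots> < \<infinity>" by (rule coupling_cost_finite[OF \<pi> \<mu> \<nu> p])
  finally show ?thesis .
qed

lemma wcost_self:
  fixes \<mu> :: "'a::polish_space measure"
  assumes \<mu>: "sets \<mu> = sets borel"
  shows "wcost p UNIV dist \<mu> \<mu> = 0"
proof -
  define \<pi> where "\<pi> = distr \<mu> (borel \<Otimes>\<^sub>M borel) (\<lambda>x. (x, x))"
  have T: "(\<lambda>x. (x, x)) \<in> measurable \<mu> (borel \<Otimes>\<^sub>M borel)"
    by (subst measurable_cong_sets[OF \<mu> refl]) measurable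
  have "distr \<pi> borel f = \<mu>" if "f = fst \<or> f = snd" for f
  proof -
    have "distr \<pi> borel f = distr \<mu> borel (f \<circ> (\<lambda>x. (x, x)))"
      unfolding \<pi>_def using that by (intro distr_distr[OF _ T]) auto
    also have "\<dots> = \<mu>" using that by (auto intro!: distr_id2 simp: \<mu> comp_def)
    finally show ?thesis .
  qed
  hence c: "\<pi> \<in> couplings UNIV dist \<mu> \<mu>" by (simp add: couplings_UNIV \<pi>_def)
  have "wcost p UNIV dist \<mu> \<mu> \<le> (\<integral>\<^sup>+ z. ennreal (dist (fst z) (snd z) powr p) \<partial>\<pi>)"
    unfolding wcost_def using c by (rule INF_lower)
  also have "\<dots> \<le> (\<integral>\<^sup>+ x. ennreal (dist (fst (x, x)) (snd (x, x)) powr p) \<partial>\<mu>)"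
    unfolding \<pi>_def by (rule nn_integral_distr_le[OF T])
  finally show ?thesis by simp
qed

lemma wcost_commute_le:
  fixes \<mu> \<nu> :: "'a::polish_space measure"
  shows "wcost p UNIV dist \<mu> \<nu> \<le> wcost p UNIV dist \<nu> \<mu>"
  unfolding wcost_def
proof (rule INF_greatest)
  fix \<pi> assume \<pi>: "\<pi> \<in> couplings UNIV dist \<nu> \<mu>"
  define \<pi>' where "\<pi>' = distr \<pi> (borel \<Otimes>\<^sub>M borel) (\<lambda>z. (snd z, fst z))"
  have T: "(\<lambda>z. (snd z, fst z)) \<in> measurable \<pi> (borel \<Otimes>\<^sub>M borel)"
    by (rule measurable_coupling[OF \<pi>]) simp
  have "distr \<pi>' borel fst = distr \<pi> borel (fst \<circ> (\<lambda>z. (snd z, fst z)))"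
    unfolding \<pi>'_def by (rule distr_distr[OF _ T]) simp
  moreover have "distr \<pi>' borel snd = distr \<pi> borel (snd \<circ> (\<lambda>z. (snd z, fst z)))"
    unfolding \<pi>'_def by (rule distr_distr[OF _ T]) simp
  ultimately have "\<pi>' \<in> couplings UNIV dist \<mu> \<nu>"
    using couplingsD(4,5)[OF \<pi>] by (simp add: couplings_UNIV \<pi>'_def comp_def)
  then have "(INF \<pi>\<in>couplings UNIV dist \<mu> \<nu>. \<integral>\<^sup>+ z. ennreal (dist (fst z) (snd z) powr p) \<partial>\<pi>)
      \<le> (\<integral>\<^sup>+ z. ennreal (dist (fst z) (snd z) powr p) \<partial>\<pi>')"
    by (rule INF_lower)
  also have "\<dots> \<le> (\<integral>\<^sup>+ z. ennreal (dist (fst z) (snd z) powr p) \<partial>\<pi>)"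
    using nn_integral_distr_le[OF T, of "\<lambda>z. ennreal (dist (fst z) (snd z) powr p)"]
    by (simp add: \<pi>'_def dist_commute)
  finally show "(INF \<pi>\<in>couplings UNIV dist \<mu> \<nu>. \<integral>\<^sup>+ z. ennreal (dist (fst z) (snd z) powr p) \<partial>\<pi>)
      \<le> (\<integral>\<^sup>+ z. ennreal (dist (fst z) (snd z) powr p) \<partial>\<pi>)" .
qed

lemma wcost_commute: "wcost p UNIV dist \<mu> \<nu> = wcost p UNIV dist \<nu> (\<mu> :: 'a::polish_space measure)"
  by (intro antisym wcost_commute_le)

lemma wass_nonneg: "0 \<le> wass p M d \<mu> \<nu>"
  unfolding wass_def wass_e_def by simp

lemma wass_commute: "wass p UNIV dist \<mu> \<nu> = wass p UNIV dist \<nu> (\<mu> :: 'a::polish_space measure)"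
  unfolding wass_def wass_e_def by (simp add: wcost_commute)

lemma wass_self: "sets \<mu> = sets borel \<Longrightarrow> wass p UNIV dist \<mu> (\<mu> :: 'a::polish_space measure) = 0"
  unfolding wass_def wass_e_def by (simp add: wcost_self)

lemma wass_e_le_ereal:
  assumes "wcost p M d \<mu> \<nu> \<le> ennreal (c powr p)" "0 \<le> c" "0 < p"
  shows "wass_e p M d \<mu> \<nu> \<le> ereal c"
proof -
  have "enn2real (wcost p M d \<mu> \<nu>) powr (1 / p) \<le> (c powr p) powr (1 / p)"
    using assms by (intro powr_mono2 enn2real_leI) auto
  with assms show ?thesis by (auto simp: wass_e_def powr_powr top_unique)
qed

context
  fixes \<mu> \<nu> :: "'a::polish_space measure" and p :: real
  assumes \<mu>: "\<mu> \<in> Pp p UNIV dist" and \<nu>: "\<nu> \<in> Pp p UNIV dist" and p: "0 < p"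
begin

lemma wass_e_eq_wass: "wass_e p UNIV dist \<mu> \<nu> = ereal (wass p UNIV dist \<mu> \<nu>)"
  using wcost_finite[OF \<mu> \<nu> p] unfolding wass_def wass_e_def by auto

lemma wcost_eq_wass_powr: "wcost p UNIV dist \<mu> \<nu> = ennreal (wass p UNIV dist \<mu> \<nu> powr p)"
  using wcost_finite[OF \<mu> \<nu> p] p by (simp add: wass_def wass_e_def powr_powr)

end

section \<open>The Wasserstein distance separates points\<close>

lemma coupling_measure_le_thickening:
  fixes \<mu> \<nu> :: "'a::polish_space measure"
  assumes \<pi>: "\<pi> \<in> couplings UNIV dist \<mu> \<nu>" and \<mu>: "prob_space \<mu>" and F: "closed F" and d: "0 < \<delta>"
  defines "D \<equiv> {z. \<delta> \<le> dist (fst z) (snd z)}"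
  shows "measure \<mu> F \<le> measure \<nu> {y. infdist y F < \<delta>} + measure \<pi> D"
    "measure \<nu> F \<le> measure \<mu> {y. infdist y F < \<delta>} + measure \<pi> D"
proof -
  interpret prob_space \<pi> by (rule prob_space_coupling[OF \<pi> \<mu>])
  define U where "U = {y. infdist y F < \<delta>}"
  have U: "U \<in> sets borel" unfolding U_def
    by (intro borel_open open_Collect_less continuous_intros)
  have D: "D \<in> sets \<pi>" unfolding couplingsD(2)[OF \<pi>] D_def
    by (intro borel_closed closed_Collect_le continuous_intros)
  have UxUNIV: "U \<times> UNIV \<in> sets \<pi>" "UNIV \<times> U \<in> sets \<pi>"
    unfolding couplingsD(1)[OF \<pi>] using U by auto
  have "F \<times> UNIV \<subseteq> (UNIV \<times> U) \<union> D"
  proof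
    fix z :: "'a \<times> 'a" assume "z \<in> F \<times> UNIV"
    then have "infdist (snd z) F \<le> dist (snd z) (fst z)" by (intro infdist_le) auto
    then have "infdist (snd z) F \<le> dist (fst z) (snd z)" by (simp add: dist_commute)
    then show "z \<in> (UNIV \<times> U) \<union> D" by (cases z) (auto simp: U_def D_def)
  qed
  moreover have "UNIV \<times> F \<subseteq> (U \<times> UNIV) \<union> D"
  proof
    fix z :: "'a \<times> 'a" assume "z \<in> UNIV \<times> F"
    then have "infdist (fst z) F \<le> dist (fst z) (snd z)" using infdist_le[of "snd z" F] by auto
    then show "z \<in> (U \<times> UNIV) \<union> D" by (cases z) (auto simp: U_def D_def)
  qed
  ultimately have "measure \<pi> (F \<times> UNIV) \<le> measure \<pi> (UNIV \<times> U) + measure \<pi> D"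
    "measure \<pi> (UNIV \<times> F) \<le> measure \<pi> (U \<times> UNIV) + measure \<pi> D"
    using finite_measure_mono measure_Un_le[OF _ D] UxUNIV D by (meson order_trans sets.Un)+
  moreover have "F \<in> sets borel" using F by (rule borel_closed)
  ultimately show "measure \<mu> F \<le> measure \<nu> U + measure \<pi> D" "measure \<nu> F \<le> measure \<mu> U + measure \<pi> D"
    using measure_coupling_Times[OF \<pi>] U by simp_all
qed

lemma coupling_measure_far_le:
  fixes \<mu> \<nu> :: "'a::polish_space measure"
  assumes \<pi>: "\<pi> \<in> couplings UNIV dist \<mu> \<nu>" and \<mu>: "prob_space \<mu>" and d: "0 < \<delta>" and p: "0 < p"
    and c: "(\<integral>\<^sup>+ z. ennreal (dist (fst z) (snd z) powr p) \<partial>\<pi>) < ennreal \<epsilon>"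
  shows "measure \<pi> {z. \<delta> \<le> dist (fst z) (snd z)} \<le> \<epsilon> / \<delta> powr p"
proof -
  interpret prob_space \<pi> by (rule prob_space_coupling[OF \<pi> \<mu>])
  define S where "S = {z::'a\<times>'a. \<delta> \<le> dist (fst z) (snd z)}"
  have mS: "S \<in> sets \<pi>" unfolding couplingsD(2)[OF \<pi>] S_def
    by (intro borel_closed closed_Collect_le continuous_intros)
  have "ennreal (\<delta> powr p * measure \<pi> S) = (\<integral>\<^sup>+ z. ennreal (\<delta> powr p) * indicator S z \<partial>\<pi>)"
    using nn_integral_cmult_indicator[OF mS] by (simp add: emeasure_eq_measure ennreal_mult'')
  also have "\<dots> \<le> (\<integral>\<^sup>+ z. ennreal (dist (fst z) (snd z) powr p) \<partial>\<pi>)"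
    using d p by (intro nn_integral_mono) (auto simp: S_def indicator_def intro!: ennreal_leI powr_mono2)
  finally have "\<delta> powr p * measure \<pi> S < \<epsilon>"
    using c by (subst ennreal_less_iff[symmetric]) auto
  then show ?thesis using d by (simp add: S_def[symmetric] pos_le_divide_eq mult.commute)
qed

lemma measure_thickenings_tendsto:
  fixes \<mu> :: "'a::metric_space measure"
  assumes "finite_measure \<mu>" "sets \<mu> = sets borel" "closed F" "F \<noteq> {}"
  shows "(\<lambda>n. measure \<mu> {y. infdist y F < inverse (Suc n)}) \<longlonglongrightarrow> measure \<mu> F"
proof -
  define G where "G n = {y. infdist y F < inverse (Suc n)}" for n
  have "decseq G"
    unfolding G_def decseq_def by (auto elim!: less_le_trans intro!: le_imp_inverse_le)
  moreover have "range G \<subseteq> sets \<mu>" unfolding G_def assms(2)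
    by (intro image_subsetI borel_open open_Collect_less continuous_intros)
  moreover have "(\<Inter>n. G n) = F"
  proof safe
    fix y assume y: "y \<in> (\<Inter>n. G n)"
    have "infdist y F = 0"
    proof (rule ccontr)
      assume "infdist y F \<noteq> 0"
      then obtain n where "inverse (Suc n) < infdist y F"
        using infdist_nonneg[of y F] reals_Archimedean by (metis order_neq_le_trans)
      moreover have "infdist y F < inverse (Suc n)" using y unfolding G_def by blast
      ultimately show False by linarith
    qed
    then show "y \<in> F" using assms(3,4) in_closure_iff_infdist_zero by (metis closure_closed)
  qed (simp add: G_def)
  ultimately have "(\<lambda>n. measure \<mu> (G n)) \<longlonglongrightarrow> measure \<mu> F"
    using finite_measure.finite_Lim_measure_decseq[OF assms(1), of G] by simp
  then show ?thesis by (simp add: G_def)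
qed

lemma wcost_eq_0_imp_eq:
  fixes \<mu> \<nu> :: "'a::polish_space measure"
  assumes \<mu>: "\<mu> \<in> Pp p UNIV dist" and \<nu>: "\<nu> \<in> Pp p UNIV dist" and p: "0 < p"
    and w: "wcost p UNIV dist \<mu> \<nu> = 0"
  shows "\<mu> = \<nu>"
proof -
  interpret M: prob_space \<mu> by (rule PpD(1)[OF \<mu>])
  interpret N: prob_space \<nu> by (rule PpD(1)[OF \<nu>])
  have thickening: "measure \<mu> F \<le> measure \<nu> {y. infdist y F < \<delta>} \<and> measure \<nu> F \<le> measure \<mu> {y. infdist y F < \<delta>}"
    if F: "closed F" and d: "0 < \<delta>" for F \<delta>
  proof -
    have "measure \<mu> F \<le> measure \<nu> {y. infdist y F < \<delta>} + e \<and> measure \<nu> F \<le> measure \<mu> {y. infdist y F < \<delta>} + e"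
      if e: "0 < e" for e
    proof -
      have "wcost p UNIV dist \<mu> \<nu> < ennreal (e * \<delta> powr p)" using w e d by simp
      then obtain \<pi> where \<pi>: "\<pi> \<in> couplings UNIV dist \<mu> \<nu>"
        and c: "(\<integral>\<^sup>+ z. ennreal (dist (fst z) (snd z) powr p) \<partial>\<pi>) < ennreal (e * \<delta> powr p)"
        unfolding wcost_def by (auto simp: INF_less_iff)
      have "measure \<pi> {z. \<delta> \<le> dist (fst z) (snd z)} \<le> e"
        using coupling_measure_far_le[OF \<pi> M.prob_space_axioms d p c] d by simp
      then show ?thesis
        using coupling_measure_le_thickening[OF \<pi> M.prob_space_axioms F d] by linarith
    qed
    then show ?thesis using field_le_epsilon by blast
  qed
  have "measure \<mu> F = measure \<nu> F" if F: "closed F" for F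
  proof (cases "F = {}")
    case False
    have "measure \<mu> F \<le> measure \<nu> F" "measure \<nu> F \<le> measure \<mu> F"
      using LIMSEQ_le_const[OF measure_thickenings_tendsto[OF _ PpD(2)[OF \<nu>] F False]]
        LIMSEQ_le_const[OF measure_thickenings_tendsto[OF _ PpD(2)[OF \<mu>] F False]]
        thickening[OF F] M.finite_measure_axioms N.finite_measure_axioms by auto
    then show ?thesis by simp
  qed simp
  then show ?thesis
    by (intro measure_eqI_generator_eq[where E="Collect closed" and \<Omega>=UNIV and A="\<lambda>_. UNIV"])
      (auto simp: Int_stable_def PpD(2)[OF \<mu>] PpD(2)[OF \<nu>] borel_eq_closed
        M.emeasure_eq_measure N.emeasure_eq_measure)
qed

lemma wass_eq_0_iff:
  fixes \<mu> \<nu> :: "'a::polish_space measure"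
  assumes \<mu>: "\<mu> \<in> Pp p UNIV dist" and \<nu>: "\<nu> \<in> Pp p UNIV dist" and p: "0 < p"
  shows "wass p UNIV dist \<mu> \<nu> = 0 \<longleftrightarrow> \<mu> = \<nu>"
  using wcost_eq_0_imp_eq[OF \<mu> \<nu> p] wcost_eq_wass_powr[OF \<mu> \<nu> p] wass_self[OF PpD(2)[OF \<mu>]] p
  by auto

section \<open>The triangle inequality\<close>

lemma convex_on_powr_nonneg:
  assumes p: "1 \<le> p"
  shows "convex_on {0..} (\<lambda>x::real. x powr p)"
proof (rule convex_onI)
  show "convex {0::real..}" by simp
  fix t x y :: real assume t: "0 < t" "t < 1" and xy: "x \<in> {0..}" "y \<in> {0..}"
  have small: "s powr p \<le> s" if "0 \<le> s" "s \<le> 1" for s :: real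
  proof -
    have "s powr p \<le> s powr 1" using that p by (intro powr_mono') auto
    then show ?thesis using that by simp
  qed
  consider "x = 0" | "y = 0" | "0 < x" "0 < y" using xy by fastforce
  then show "((1 - t) *\<^sub>R x + t *\<^sub>R y) powr p \<le> (1 - t) * x powr p + t * y powr p"
  proof cases
    case 1
    have "(t * y) powr p = t powr p * y powr p" using t xy by (simp add: powr_mult)
    also have "\<dots> \<le> t * y powr p" using small[of t] t by (intro mult_right_mono) auto
    finally show ?thesis using 1 by simp
  next
    case 2
    have "((1 - t) * x) powr p = (1 - t) powr p * x powr p" using t xy by (simp add: powr_mult)
    also have "\<dots> \<le> (1 - t) * x powr p" using small[of "1 - t"] t by (intro mult_right_mono) auto
    finally show ?thesis using 2 by simp
  next
    case 3
    then show ?thesis using convex_onD[OF powr_convex[OF p], of t x y] t by simp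
  qed
qed

lemma powr_sum_le_weighted:
  fixes a w :: "'i \<Rightarrow> real"
  assumes I: "finite I" "I \<noteq> {}" and w: "\<And>i. i \<in> I \<Longrightarrow> 0 < w i" "sum w I = 1"
    and a: "\<And>i. i \<in> I \<Longrightarrow> 0 \<le> a i" and p: "1 \<le> p"
  shows "(\<Sum>i\<in>I. a i) powr p \<le> (\<Sum>i\<in>I. w i powr (1 - p) * a i powr p)"
proof -
  have "0 \<le> a i / w i" if "i \<in> I" for i using a[OF that] w(1)[OF that] by simp
  have "(\<Sum>i\<in>I. a i) = (\<Sum>i\<in>I. w i *\<^sub>R (a i / w i))"
    by (intro sum.cong refl) (auto dest!: w(1))
  also have "\<dots> powr p \<le> (\<Sum>i\<in>I. w i * (a i / w i) powr p)"
    using w \<open>\<And>i. i \<in> I \<Longrightarrow> 0 \<le> a i / w i\<close> by (intro convex_on_sum[OF I convex_on_powr_nonneg[OF p]]) (auto intro: less_imp_le)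
  also have "\<dots> = (\<Sum>i\<in>I. w i powr (1 - p) * a i powr p)"
  proof (rule sum.cong[OF refl])
    fix i assume "i \<in> I"
    then have "0 < w i" "0 \<le> a i" using w a by auto
    then show "w i * (a i / w i) powr p = w i powr (1 - p) * a i powr p"
      by (simp add: powr_divide powr_diff)
  qed
  finally show ?thesis .
qed

lemma sum_weighted_powr_self:
  fixes s :: "'i \<Rightarrow> real"
  assumes I: "finite I" "I \<noteq> {}" and s: "\<And>i. i \<in> I \<Longrightarrow> 0 < s i"
  shows "(\<Sum>i\<in>I. (s i / sum s I) powr (1 - p) * s i powr p) = sum s I powr p"
proof -
  define S where "S = sum s I"
  have S: "0 < S" unfolding S_def using s I by (intro sum_pos) auto
  have "(s i / S) powr (1 - p) * s i powr p = s i * S powr (p - 1)" if "i \<in> I" for i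
    using s[OF that] S by (simp add: powr_divide powr_diff powr_add[symmetric] divide_simps)
  then have "(\<Sum>i\<in>I. (s i / S) powr (1 - p) * s i powr p) = S * S powr (p - 1)"
    by (simp add: S_def sum_distrib_right)
  also have "\<dots> = S powr p" using S by (simp add: powr_add[symmetric] powr_diff)
  finally show ?thesis unfolding S_def .
qed

lemma countable_partition_small_cells:
  fixes \<epsilon> :: real
  assumes e: "0 < \<epsilon>"
  obtains B :: "nat \<Rightarrow> 'a::polish_space set"
  where "\<And>k. B k \<in> sets borel" "disjoint_family B" "(\<Union>k. B k) = UNIV"
    "\<And>k y y'. y \<in> B k \<Longrightarrow> y' \<in> B k \<Longrightarrow> dist y y' \<le> \<epsilon>"
proof -
  obtain D :: "'a set" where D: "countable D" "\<And>X. open X \<Longrightarrow> X \<noteq> {} \<Longrightarrow> \<exists>d\<in>D. d \<in> X"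
    by (rule countable_dense_setE) blast
  define q where "q = from_nat_into D"
  define A where "A k = ball (q k) (\<epsilon> / 2)" for k
  define B where "B = disjointed A"
  have oA: "open (A k)" for k unfolding A_def by simp
  have mB: "B k \<in> sets borel" for k
  proof -
    have "A k \<in> sets borel" using oA by (rule borel_open)
    moreover have "(\<Union>i\<in>{0..<k}. A i) \<in> sets borel"
      by (rule borel_open) (rule open_UN, use oA in blast)
    ultimately show ?thesis unfolding B_def disjointed_def by (rule sets.Diff)
  qed
  have cov: "y \<in> (\<Union>k. A k)" for y
  proof -
    have ne: "ball y (\<epsilon> / 2) \<noteq> {}" using e by simp
    have "\<exists>d\<in>D. d \<in> ball y (\<epsilon> / 2)" using D(2)[OF open_ball ne] .
    then obtain d where d: "d \<in> D" "d \<in> ball y (\<epsilon> / 2)" by blast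
    have dd: "dist (q n) y < \<epsilon> / 2" if "q n = d" for n using d(2) that by (simp add: dist_commute)
    obtain n where "q n = d" using from_nat_into_surj[OF D(1) d(1)] unfolding q_def by blast
    then have "y \<in> A n" unfolding A_def using dd by simp
    then show ?thesis by blast
  qed
  have uA: "(\<Union>k. A k) = UNIV" using cov by blast
  have uB: "(\<Union>k. B k) = UNIV" unfolding B_def UN_disjointed_eq by (rule uA)
  have dB: "dist y y' \<le> \<epsilon>" if "y \<in> B k" "y' \<in> B k" for k y y'
  proof -
    have "y \<in> A k" "y' \<in> A k" using that disjointed_subset[of A k] unfolding B_def by blast+
    then have h: "dist (q k) y < \<epsilon> / 2" "dist (q k) y' < \<epsilon> / 2" unfolding A_def by auto
    have "dist y y' \<le> dist y (q k) + dist y' (q k)" by (rule dist_triangle2)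
    then show ?thesis using h dist_commute[of y "q k"] dist_commute[of y' "q k"] by linarith
  qed
  show ?thesis
    by (rule that[OF mB _ uB dB]) (simp add: B_def disjoint_family_disjointed)
qed

lemma suminf_nn_integral_partition:
  assumes R: "\<And>k. R k \<in> sets M" and d: "disjoint_family R" and u: "(\<Union>k. R k) = space M"
    and g: "g \<in> borel_measurable M"
  shows "(\<Sum>k. \<integral>\<^sup>+ z. g z * indicator (R k) z \<partial>M) = (\<integral>\<^sup>+ z. g z \<partial>M)"
proof -
  have "(\<Sum>k. \<integral>\<^sup>+ z. g z * indicator (R k) z \<partial>M) = (\<integral>\<^sup>+ z. (\<Sum>k. g z * indicator (R k) z) \<partial>M)"
    by (rule nn_integral_suminf[symmetric]) (use g R in auto)
  also have "\<dots> = (\<integral>\<^sup>+ z. g z * indicator (\<Union>k. R k) z \<partial>M)"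
    by (simp add: suminf_indicator[OF d])
  also have "\<dots> = (\<integral>\<^sup>+ z. g z \<partial>M)"
    by (rule nn_integral_cong) (simp add: u)
  finally show ?thesis .
qed

locale gluing =
  fixes \<mu> \<nu> \<rho> :: "'a::polish_space measure"
    and \<pi>1 \<pi>2 :: "('a \<times> 'a) measure" and B :: "nat \<Rightarrow> 'a set"
  assumes \<mu>: "prob_space \<mu>"
    and \<pi>1: "\<pi>1 \<in> couplings UNIV dist \<mu> \<nu>" and \<pi>2: "\<pi>2 \<in> couplings UNIV dist \<nu> \<rho>"
    and Bm: "\<And>k. B k \<in> sets borel" and Bd: "disjoint_family B" and Bu: "(\<Union>k. B k) = UNIV"
begin

text \<open>On the cell \<open>B k\<close>, the part of \<open>\<pi>1\<close> whose second coordinate lies in \<open>B k\<close> is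
  combined independently with the normalised part of \<open>\<pi>2\<close> whose first coordinate lies in
  \<open>B k\<close>. Summing over the cells glues \<open>\<pi>1\<close> and \<open>\<pi>2\<close> without disintegrating \<open>\<nu>\<close>, at the
  price of an error \<open>diam (B k)\<close> between the two middle coordinates.\<close>

definition "mass k = measure \<nu> (B k)"
definition "left k = density \<pi>1 (indicator (UNIV \<times> B k))"
definition "right k = density \<pi>2 (\<lambda>z. ennreal (1 / mass k) * indicator (B k \<times> UNIV) z)"
definition "piece k = left k \<Otimes>\<^sub>M right k"
definition "glued = count_space UNIV \<bind> piece"
abbreviation "T \<equiv> (borel \<Otimes>\<^sub>M borel) \<Otimes>\<^sub>M (borel \<Otimes>\<^sub>M borel :: ('a \<times> 'a) measure)"

lemma sets_marginals: "sets \<mu> = sets borel" "sets \<nu> = sets borel" "sets \<rho> = sets borel"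
  using couplingsD(4,5)[OF \<pi>1] couplingsD(5)[OF \<pi>2] by auto

lemma prob_space_\<pi>1: "prob_space \<pi>1"
  by (rule prob_space_coupling[OF \<pi>1 \<mu>])

lemma prob_space_\<nu>: "prob_space \<nu>"
  using prob_space.prob_space_distr[OF prob_space_\<pi>1 measurable_coupling[OF \<pi>1 measurable_snd]]
  by (simp add: couplingsD(5)[OF \<pi>1])

lemma prob_space_\<pi>2: "prob_space \<pi>2"
  by (rule prob_space_coupling[OF \<pi>2 prob_space_\<nu>])

lemma sets_cell1: "UNIV \<times> B k \<in> sets \<pi>1"
  unfolding couplingsD(1)[OF \<pi>1] by (intro pair_measureI) (simp_all add: Bm)
lemma sets_cell2: "B k \<times> UNIV \<in> sets \<pi>2"
  unfolding couplingsD(1)[OF \<pi>2] by (intro pair_measureI) (simp_all add: Bm)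

lemma emeasure_cell1: "emeasure \<pi>1 (UNIV \<times> B k) = ennreal (mass k)"
proof -
  interpret prob_space \<pi>1 by (rule prob_space_\<pi>1)
  show ?thesis using measure_coupling_Times(2)[OF \<pi>1 Bm[of k]] by (simp add: emeasure_eq_measure mass_def)
qed

lemma emeasure_cell2: "emeasure \<pi>2 (B k \<times> UNIV) = ennreal (mass k)"
proof -
  interpret prob_space \<pi>2 by (rule prob_space_\<pi>2)
  show ?thesis using measure_coupling_Times(1)[OF \<pi>2 Bm[of k]] by (simp add: emeasure_eq_measure mass_def)
qed

lemma mass_nonneg: "0 \<le> mass k" unfolding mass_def by simp

lemma sets_left: "sets (left k) = sets (borel \<Otimes>\<^sub>M borel)"
  unfolding left_def using couplingsD(1)[OF \<pi>1] by simp
lemma sets_right: "sets (right k) = sets (borel \<Otimes>\<^sub>M borel)"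
  unfolding right_def using couplingsD(1)[OF \<pi>2] by simp
lemma space_left: "space (left k) = UNIV"
  unfolding left_def using couplingsD(3)[OF \<pi>1] by simp
lemma space_right: "space (right k) = UNIV"
  unfolding right_def using couplingsD(3)[OF \<pi>2] by simp

lemma density_left_measurable: "indicator (UNIV \<times> B k) \<in> borel_measurable \<pi>1"
  using sets_cell1 by (rule borel_measurable_indicator)
lemma density_right_measurable: "(\<lambda>z. ennreal (1 / mass k) * indicator (B k \<times> UNIV) z) \<in> borel_measurable \<pi>2"
  using sets_cell2 by (intro borel_measurable_times_ennreal borel_measurable_indicator borel_measurable_const)

lemma emeasure_left_UNIV: "emeasure (left k) UNIV = ennreal (mass k)"
proof -
  have U: "UNIV \<in> sets \<pi>1" using sets.top[of \<pi>1] couplingsD(3)[OF \<pi>1] by simp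
  have "emeasure (left k) UNIV = (\<integral>\<^sup>+ x. indicator (UNIV \<times> B k) x * indicator UNIV x \<partial>\<pi>1)"
    unfolding left_def by (rule emeasure_density[OF density_left_measurable U])
  also have "\<dots> = emeasure \<pi>1 (UNIV \<times> B k)" using sets_cell1 by simp
  finally show ?thesis by (simp add: emeasure_cell1)
qed

lemma emeasure_right_UNIV: "emeasure (right k) UNIV = ennreal (1 / mass k) * ennreal (mass k)"
proof -
  have U: "UNIV \<in> sets \<pi>2" using sets.top[of \<pi>2] couplingsD(3)[OF \<pi>2] by simp
  have "emeasure (right k) UNIV = (\<integral>\<^sup>+ x. ennreal (1 / mass k) * indicator (B k \<times> UNIV) x * indicator UNIV x \<partial>\<pi>2)"
    unfolding right_def by (rule emeasure_density[OF density_right_measurable U])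
  also have "\<dots> = ennreal (1 / mass k) * emeasure \<pi>2 (B k \<times> UNIV)"
    using sets_cell2 by (simp add: nn_integral_cmult_indicator)
  finally show ?thesis by (simp add: emeasure_cell2)
qed

lemma mass_le_1: "mass k \<le> 1"
proof -
  interpret prob_space \<nu> by (rule prob_space_\<nu>)
  show ?thesis unfolding mass_def by simp
qed

text \<open>Since \<open>1 / 0 = 0\<close>, cells of \<open>\<nu>\<close>-measure zero carry no mass in \<open>glued\<close>.\<close>

lemma inverse_mass_mult: "ennreal (1 / mass k) * ennreal (mass k) = (if mass k = 0 then 0 else 1)"
  using mass_nonneg[of k] by (simp add: ennreal_mult[symmetric])

lemma finite_measure_left: "finite_measure (left k)"
  by (rule finite_measureI) (simp add: space_left emeasure_left_UNIV)
lemma finite_measure_right: "finite_measure (right k)"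
  by (rule finite_measureI) (simp add: space_right emeasure_right_UNIV ennreal_mult_eq_top_iff)

lemma sets_piece: "sets (piece k) = sets T"
  unfolding piece_def by (rule sets_pair_measure_cong[OF sets_left sets_right])

lemma space_piece: "space (piece k) = UNIV"
  using sets_eq_imp_space_eq[OF sets_piece[of k]] by (simp add: space_pair_measure)

lemma emeasure_piece_UNIV: "emeasure (piece k) UNIV = ennreal (mass k) * (ennreal (1 / mass k) * ennreal (mass k))"
proof -
  interpret right: finite_measure "right k" by (rule finite_measure_right)
  have "emeasure (piece k) (UNIV \<times> UNIV) = emeasure (left k) UNIV * emeasure (right k) UNIV"
  proof -
    have U: "UNIV \<in> sets (borel \<Otimes>\<^sub>M borel :: ('a \<times> 'a) measure)"
      using sets.top[of "borel \<Otimes>\<^sub>M borel :: ('a \<times> 'a) measure"] by (simp add: space_pair_measure)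
    show ?thesis unfolding piece_def by (rule right.emeasure_pair_measure_Times) (simp_all add: sets_left sets_right U)
  qed
  then show ?thesis by (simp add: emeasure_left_UNIV emeasure_right_UNIV)
qed

lemma measurable_piece: "piece \<in> measurable (count_space UNIV) (subprob_algebra T)"
proof -
  have "piece k \<in> space (subprob_algebra T)" for k
  proof -
    have "emeasure (piece k) UNIV \<le> 1"
      unfolding emeasure_piece_UNIV inverse_mass_mult using mass_le_1[of k] by auto
    then have "subprob_space (piece k)" by (intro subprob_spaceI) (simp_all add: space_piece)
    then show ?thesis by (simp add: space_subprob_algebra sets_piece)
  qed
  then show ?thesis by simp
qed

lemma sets_glued: "sets glued = sets T"
  unfolding glued_def by (rule sets_bind) (simp_all add: sets_piece)

lemma nn_integral_glued: "f \<in> borel_measurable T \<Longrightarrow> (\<integral>\<^sup>+ z. f z \<partial>glued) = (\<Sum>k. \<integral>\<^sup>+ z. f z \<partial>piece k)"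
  unfolding glued_def by (simp add: nn_integral_bind[OF _ measurable_piece] nn_integral_count_space_nat)

lemma nn_integral_piece_fst:
  assumes g: "g \<in> borel_measurable (borel \<Otimes>\<^sub>M borel)"
  shows "(\<integral>\<^sup>+ z. g (fst z) \<partial>piece k) = (\<integral>\<^sup>+ z. g z \<partial>left k) * emeasure (right k) UNIV"
proof -
  interpret right: finite_measure "right k" by (rule finite_measure_right)
  have gP: "g \<in> borel_measurable (left k)" by (subst measurable_cong_sets[OF sets_left[of k] refl]) (rule g)
  have m: "(\<lambda>z. g (fst z)) \<in> borel_measurable (left k \<Otimes>\<^sub>M right k)" using gP by measurable
  have "(\<integral>\<^sup>+ z. g (fst z) \<partial>piece k) = (\<integral>\<^sup>+ x. \<integral>\<^sup>+ y. g (fst (x, y)) \<partial>right k \<partial>left k)"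
    unfolding piece_def by (rule right.nn_integral_fst[symmetric]) (rule m)
  also have "\<dots> = (\<integral>\<^sup>+ x. g x * emeasure (right k) UNIV \<partial>left k)" by (simp add: space_right)
  also have "\<dots> = (\<integral>\<^sup>+ z. g z \<partial>left k) * emeasure (right k) UNIV" by (rule nn_integral_multc[OF gP])
  finally show ?thesis .
qed

lemma nn_integral_piece_snd:
  assumes g: "g \<in> borel_measurable (borel \<Otimes>\<^sub>M borel)"
  shows "(\<integral>\<^sup>+ z. g (snd z) \<partial>piece k) = (\<integral>\<^sup>+ z. g z \<partial>right k) * emeasure (left k) UNIV"
proof -
  interpret right: finite_measure "right k" by (rule finite_measure_right)
  have gQ: "g \<in> borel_measurable (right k)" by (subst measurable_cong_sets[OF sets_right[of k] refl]) (rule g)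
  have m: "(\<lambda>z. g (snd z)) \<in> borel_measurable (left k \<Otimes>\<^sub>M right k)" using gQ by measurable
  have "(\<integral>\<^sup>+ z. g (snd z) \<partial>piece k) = (\<integral>\<^sup>+ x. \<integral>\<^sup>+ y. g (snd (x, y)) \<partial>right k \<partial>left k)"
    unfolding piece_def by (rule right.nn_integral_fst[symmetric]) (rule m)
  also have "\<dots> = (\<integral>\<^sup>+ x. (\<integral>\<^sup>+ y. g y \<partial>right k) \<partial>left k)" by simp
  also have "\<dots> = (\<integral>\<^sup>+ z. g z \<partial>right k) * emeasure (left k) UNIV" by (simp add: space_left)
  finally show ?thesis .
qed

lemma nn_integral_left:
  assumes g: "g \<in> borel_measurable (borel \<Otimes>\<^sub>M borel)"
  shows "(\<integral>\<^sup>+ z. g z \<partial>left k) = (\<integral>\<^sup>+ z. g z * indicator (UNIV \<times> B k) z \<partial>\<pi>1)"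
proof -
  have g1: "g \<in> borel_measurable \<pi>1" using g by (rule measurable_coupling[OF \<pi>1])
  show ?thesis unfolding left_def by (simp add: nn_integral_density[OF density_left_measurable g1] mult.commute)
qed

lemma nn_integral_right:
  assumes g: "g \<in> borel_measurable (borel \<Otimes>\<^sub>M borel)"
  shows "(\<integral>\<^sup>+ z. g z \<partial>right k) = ennreal (1 / mass k) * (\<integral>\<^sup>+ z. g z * indicator (B k \<times> UNIV) z \<partial>\<pi>2)"
proof -
  have g2: "g \<in> borel_measurable \<pi>2" using g by (rule measurable_coupling[OF \<pi>2])
  have "(\<integral>\<^sup>+ z. g z \<partial>right k) = (\<integral>\<^sup>+ z. ennreal (1 / mass k) * (g z * indicator (B k \<times> UNIV) z) \<partial>\<pi>2)"
    unfolding right_def by (simp add: nn_integral_density[OF density_right_measurable g2] ac_simps)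
  also have "\<dots> = ennreal (1 / mass k) * (\<integral>\<^sup>+ z. g z * indicator (B k \<times> UNIV) z \<partial>\<pi>2)"
    by (rule nn_integral_cmult) (use g2 sets_cell2 in simp)
  finally show ?thesis .
qed

lemma nn_integral_cell1_null: "mass k = 0 \<Longrightarrow> (\<integral>\<^sup>+ z. g z * indicator (UNIV \<times> B k) z \<partial>\<pi>1) = 0"
  by (rule nn_integral_null_set) (simp add: null_sets_def sets_cell1 emeasure_cell1)
lemma nn_integral_cell2_null: "mass k = 0 \<Longrightarrow> (\<integral>\<^sup>+ z. g z * indicator (B k \<times> UNIV) z \<partial>\<pi>2) = 0"
  by (rule nn_integral_null_set) (simp add: null_sets_def sets_cell2 emeasure_cell2)

lemma nn_integral_glued_fst:
  assumes g: "g \<in> borel_measurable (borel \<Otimes>\<^sub>M borel)"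
  shows "(\<integral>\<^sup>+ z. g (fst z) \<partial>glued) = (\<integral>\<^sup>+ z. g z \<partial>\<pi>1)"
proof -
  have mT: "(\<lambda>z. g (fst z)) \<in> borel_measurable T" using g by measurable
  have "(\<integral>\<^sup>+ z. g (fst z) \<partial>glued) = (\<Sum>k. \<integral>\<^sup>+ z. g (fst z) \<partial>piece k)" by (rule nn_integral_glued[OF mT])
  also have "\<dots> = (\<Sum>k. \<integral>\<^sup>+ z. g z * indicator (UNIV \<times> B k) z \<partial>\<pi>1)"
  proof (rule suminf_cong)
    fix k
    show "(\<integral>\<^sup>+ z. g (fst z) \<partial>piece k) = (\<integral>\<^sup>+ z. g z * indicator (UNIV \<times> B k) z \<partial>\<pi>1)"
      unfolding nn_integral_piece_fst[OF g] nn_integral_left[OF g] emeasure_right_UNIV inverse_mass_mult using nn_integral_cell1_null[of k g] by auto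
  qed
  also have "\<dots> = (\<integral>\<^sup>+ z. g z \<partial>\<pi>1)"
  proof (rule suminf_nn_integral_partition)
    show "UNIV \<times> B k \<in> sets \<pi>1" for k by (rule sets_cell1)
    show "disjoint_family (\<lambda>k. UNIV \<times> B k)" using Bd by (auto simp: disjoint_family_on_def)
    have "(\<Union>k. UNIV \<times> B k) = UNIV \<times> (\<Union>k. B k)" by blast
    then show "(\<Union>k. UNIV \<times> B k) = space \<pi>1" using Bu couplingsD(3)[OF \<pi>1] by simp
    show "g \<in> borel_measurable \<pi>1" using g by (rule measurable_coupling[OF \<pi>1])
  qed
  finally show ?thesis .
qed

lemma nn_integral_glued_snd:
  assumes g: "g \<in> borel_measurable (borel \<Otimes>\<^sub>M borel)"
  shows "(\<integral>\<^sup>+ z. g (snd z) \<partial>glued) = (\<integral>\<^sup>+ z. g z \<partial>\<pi>2)"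
proof -
  have mT: "(\<lambda>z. g (snd z)) \<in> borel_measurable T" using g by measurable
  have "(\<integral>\<^sup>+ z. g (snd z) \<partial>glued) = (\<Sum>k. \<integral>\<^sup>+ z. g (snd z) \<partial>piece k)" by (rule nn_integral_glued[OF mT])
  also have "\<dots> = (\<Sum>k. \<integral>\<^sup>+ z. g z * indicator (B k \<times> UNIV) z \<partial>\<pi>2)"
  proof (rule suminf_cong)
    fix k
    have "(\<integral>\<^sup>+ z. g (snd z) \<partial>piece k) = (\<integral>\<^sup>+ z. g z * indicator (B k \<times> UNIV) z \<partial>\<pi>2) * (ennreal (1 / mass k) * ennreal (mass k))"
      unfolding nn_integral_piece_snd[OF g] nn_integral_right[OF g] emeasure_left_UNIV by (simp add: ac_simps)
    then show "(\<integral>\<^sup>+ z. g (snd z) \<partial>piece k) = (\<integral>\<^sup>+ z. g z * indicator (B k \<times> UNIV) z \<partial>\<pi>2)"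
      unfolding inverse_mass_mult using nn_integral_cell2_null[of k g] by auto
  qed
  also have "\<dots> = (\<integral>\<^sup>+ z. g z \<partial>\<pi>2)"
  proof (rule suminf_nn_integral_partition)
    show "B k \<times> UNIV \<in> sets \<pi>2" for k by (rule sets_cell2)
    show "disjoint_family (\<lambda>k. B k \<times> UNIV)" using Bd by (auto simp: disjoint_family_on_def)
    have "(\<Union>k. B k \<times> UNIV) = (\<Union>k. B k) \<times> UNIV" by blast
    then show "(\<Union>k. B k \<times> UNIV) = space \<pi>2" using Bu couplingsD(3)[OF \<pi>2] by simp
    show "g \<in> borel_measurable \<pi>2" using g by (rule measurable_coupling[OF \<pi>2])
  qed
  finally show ?thesis .
qed

abbreviation "outer \<equiv> (\<lambda>z::('a \<times> 'a) \<times> ('a \<times> 'a). (fst (fst z), snd (snd z)))"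
definition "composed = distr glued (borel \<Otimes>\<^sub>M borel) outer"

lemma measurable_outer: "outer \<in> measurable glued (borel \<Otimes>\<^sub>M borel)"
  by (subst measurable_cong_sets[OF sets_glued refl]) measurable

lemma measurable_glued: "f \<in> measurable T N \<Longrightarrow> f \<in> measurable glued N"
  by (subst measurable_cong_sets[OF sets_glued refl])

lemma distr_composed_fst: "distr composed borel fst = \<mu>"
proof -
  have d: "distr composed borel fst = distr glued borel (fst \<circ> outer)"
    unfolding composed_def by (rule distr_distr[OF _ measurable_outer]) simp
  show ?thesis unfolding d
  proof (rule measure_eqI)
    show "sets (distr glued borel (fst \<circ> outer)) = sets \<mu>" using sets_marginals(1) by simp
    fix A assume "A \<in> sets (distr glued borel (fst \<circ> outer))"
    then have A: "A \<in> sets borel" by simp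
    have m: "fst \<circ> outer \<in> measurable glued borel" by (rule measurable_glued) simp
    have "emeasure (distr glued borel (fst \<circ> outer)) A = (\<integral>\<^sup>+ x. indicator A x \<partial>distr glued borel (fst \<circ> outer))"
      using A by simp
    also have "\<dots> = (\<integral>\<^sup>+ z. indicator A (fst (fst z)) \<partial>glued)"
      by (subst nn_integral_distr[OF m]) (simp_all add: borel_measurable_indicator[OF A] comp_def)
    also have "\<dots> = (\<integral>\<^sup>+ z. indicator A (fst z) \<partial>\<pi>1)"
      using nn_integral_glued_fst[of "\<lambda>z. indicator A (fst z)"] A by simp
    also have "\<dots> = (\<integral>\<^sup>+ x. indicator A x \<partial>\<mu>)"
      using nn_integral_coupling_fst[OF \<pi>1 borel_measurable_indicator[OF A]] by simp
    also have "\<dots> = emeasure \<mu> A" using A sets_marginals(1) by simp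
    finally show "emeasure (distr glued borel (fst \<circ> outer)) A = emeasure \<mu> A" .
  qed
qed

lemma distr_composed_snd: "distr composed borel snd = \<rho>"
proof -
  have d: "distr composed borel snd = distr glued borel (snd \<circ> outer)"
    unfolding composed_def by (rule distr_distr[OF _ measurable_outer]) simp
  show ?thesis unfolding d
  proof (rule measure_eqI)
    show "sets (distr glued borel (snd \<circ> outer)) = sets \<rho>" using sets_marginals(3) by simp
    fix A assume "A \<in> sets (distr glued borel (snd \<circ> outer))"
    then have A: "A \<in> sets borel" by simp
    have m: "snd \<circ> outer \<in> measurable glued borel" by (rule measurable_glued) simp
    have "emeasure (distr glued borel (snd \<circ> outer)) A = (\<integral>\<^sup>+ x. indicator A x \<partial>distr glued borel (snd \<circ> outer))"
      using A by simp
    also have "\<dots> = (\<integral>\<^sup>+ z. indicator A (snd (snd z)) \<partial>glued)"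
      by (subst nn_integral_distr[OF m]) (simp_all add: borel_measurable_indicator[OF A] comp_def)
    also have "\<dots> = (\<integral>\<^sup>+ z. indicator A (snd z) \<partial>\<pi>2)"
      using nn_integral_glued_snd[of "\<lambda>z. indicator A (snd z)"] A by simp
    also have "\<dots> = (\<integral>\<^sup>+ x. indicator A x \<partial>\<rho>)"
      using nn_integral_coupling_snd[OF \<pi>2 borel_measurable_indicator[OF A]] by simp
    also have "\<dots> = emeasure \<rho> A" using A sets_marginals(3) by simp
    finally show "emeasure (distr glued borel (snd \<circ> outer)) A = emeasure \<rho> A" .
  qed
qed

lemma composed_in_couplings: "composed \<in> couplings UNIV dist \<mu> \<rho>"
  unfolding couplings_UNIV using distr_composed_fst distr_composed_snd by (simp add: composed_def)

lemma AE_piece_cells: "AE z in piece k. snd (fst z) \<in> B k \<and> fst (snd z) \<in> B k"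
proof -
  interpret left: finite_measure "left k" by (rule finite_measure_left)
  interpret right: finite_measure "right k" by (rule finite_measure_right)
  interpret PQ: pair_sigma_finite "left k" "right k" ..
  have aeP: "AE x in left k. snd x \<in> B k"
    unfolding left_def AE_density[OF density_left_measurable]
    by (rule AE_I2) (auto simp: mem_Times_iff split: split_indicator)
  have aeQ: "AE y in right k. fst y \<in> B k"
    unfolding right_def AE_density[OF density_right_measurable]
    by (rule AE_I2) (auto simp: mem_Times_iff split: split_indicator)
  have r: "UNIV \<times> B k \<in> sets (borel \<Otimes>\<^sub>M borel)" "B k \<times> UNIV \<in> sets (borel \<Otimes>\<^sub>M borel)"
    by (intro pair_measureI; simp add: Bm)+
  have "{x \<in> space (left k \<Otimes>\<^sub>M right k). snd (fst x) \<in> B k \<and> fst (snd x) \<in> B k} = (UNIV \<times> B k) \<times> (B k \<times> UNIV)"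
    by (auto simp: space_pair_measure space_left space_right)
  also have "\<dots> \<in> sets (left k \<Otimes>\<^sub>M right k)"
    using r by (intro pair_measureI) (simp_all add: sets_left sets_right)
  finally have mset: "{x \<in> space (left k \<Otimes>\<^sub>M right k). snd (fst x) \<in> B k \<and> fst (snd x) \<in> B k} \<in> sets (left k \<Otimes>\<^sub>M right k)" .
  have "AE x in left k. AE y in right k. snd (fst (x, y)) \<in> B k \<and> fst (snd (x, y)) \<in> B k"
  proof (rule AE_mp[OF aeP], rule AE_I2, rule impI)
    fix x :: "'a \<times> 'a" assume x: "snd x \<in> B k"
    show "AE y in right k. snd (fst (x, y)) \<in> B k \<and> fst (snd (x, y)) \<in> B k"
      by (rule AE_mp[OF aeQ], rule AE_I2) (simp add: x)
  qed
  then show ?thesis unfolding piece_def by (rule PQ.AE_pair_measure[OF mset])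
qed

lemma composed_cost_le:
  fixes L1 L2 L3 \<epsilon> p :: real
  assumes p: "0 \<le> p" and diam: "\<And>k y y'. y \<in> B k \<Longrightarrow> y' \<in> B k \<Longrightarrow> dist y y' \<le> \<epsilon>" and e: "0 \<le> \<epsilon>"
    and L: "0 \<le> L1" "0 \<le> L2" "0 \<le> L3"
    and spl: "\<And>a b c. 0 \<le> a \<Longrightarrow> 0 \<le> b \<Longrightarrow> 0 \<le> c \<Longrightarrow> (a + b + c) powr p \<le> L1 * a powr p + L2 * b powr p + L3 * c powr p"
  shows "(\<integral>\<^sup>+ z. ennreal (dist (fst z) (snd z) powr p) \<partial>composed) \<le>
    (\<integral>\<^sup>+ z. ennreal (L1 * dist (fst z) (snd z) powr p) \<partial>\<pi>1) + ennreal (L2 * \<epsilon> powr p)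
     + (\<integral>\<^sup>+ z. ennreal (L3 * dist (fst z) (snd z) powr p) \<partial>\<pi>2)"
proof -
  define g where "g z = ennreal (dist (fst (fst z)) (snd (snd z)) powr p)" for z :: "('a \<times> 'a) \<times> ('a \<times> 'a)"
  define h1 where "h1 z = ennreal (L1 * dist (fst z) (snd z) powr p)" for z :: "'a \<times> 'a"
  define h3 where "h3 z = ennreal (L3 * dist (fst z) (snd z) powr p)" for z :: "'a \<times> 'a"
  define c where "c = ennreal (L2 * \<epsilon> powr p)"
  define h where "h z = h1 (fst z) + c + h3 (snd z)" for z :: "('a \<times> 'a) \<times> ('a \<times> 'a)"
  have mh1: "h1 \<in> borel_measurable (borel \<Otimes>\<^sub>M borel)" unfolding h1_def by measurable
  have mh3: "h3 \<in> borel_measurable (borel \<Otimes>\<^sub>M borel)" unfolding h3_def by measurable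
  have mg: "g \<in> borel_measurable T" unfolding g_def by measurable
  have mh: "h \<in> borel_measurable T" unfolding h_def using mh1 mh3 by measurable
  have "(\<integral>\<^sup>+ z. ennreal (dist (fst z) (snd z) powr p) \<partial>composed) = (\<integral>\<^sup>+ z. g z \<partial>glued)"
    unfolding composed_def g_def by (subst nn_integral_distr[OF measurable_outer]) (simp_all, measurable)
  also have "\<dots> = (\<Sum>k. \<integral>\<^sup>+ z. g z \<partial>piece k)" by (rule nn_integral_glued[OF mg])
  also have "\<dots> \<le> (\<Sum>k. \<integral>\<^sup>+ z. h z \<partial>piece k)"
  proof (rule suminf_le[OF _ summableI summableI])
    fix k
    show "(\<integral>\<^sup>+ z. g z \<partial>piece k) \<le> (\<integral>\<^sup>+ z. h z \<partial>piece k)"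
    proof (rule nn_integral_mono_AE)
      show "AE z in piece k. g z \<le> h z"
      proof (rule AE_mp[OF AE_piece_cells], rule AE_I2, rule impI)
        fix z :: "('a \<times> 'a) \<times> ('a \<times> 'a)"
        assume zB: "snd (fst z) \<in> B k \<and> fst (snd z) \<in> B k"
        define x0 where "x0 = fst (fst z)"
        define y1 where "y1 = snd (fst z)"
        define y2 where "y2 = fst (snd z)"
        define z3 where "z3 = snd (snd z)"
        have dy: "dist y1 y2 \<le> \<epsilon>" using diam zB unfolding y1_def y2_def by blast
        have t1: "dist x0 z3 \<le> dist x0 y1 + dist y1 z3" by (rule dist_triangle)
        have t2: "dist y1 z3 \<le> dist y1 y2 + dist y2 z3" by (rule dist_triangle)
        have "dist x0 z3 \<le> dist x0 y1 + \<epsilon> + dist y2 z3" using t1 t2 dy by linarith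
        hence "dist x0 z3 powr p \<le> (dist x0 y1 + \<epsilon> + dist y2 z3) powr p"
          using p by (intro powr_mono2) auto
        also have "\<dots> \<le> L1 * dist x0 y1 powr p + L2 * \<epsilon> powr p + L3 * dist y2 z3 powr p"
          using e by (intro spl) auto
        finally have "ennreal (dist x0 z3 powr p) \<le> ennreal (L1 * dist x0 y1 powr p + L2 * \<epsilon> powr p + L3 * dist y2 z3 powr p)"
          by (rule ennreal_leI)
        also have "\<dots> = ennreal (L1 * dist x0 y1 powr p) + ennreal (L2 * \<epsilon> powr p) + ennreal (L3 * dist y2 z3 powr p)"
          using L by (simp add: ennreal_plus[symmetric] del: ennreal_plus)
        finally show "g z \<le> h z"
          unfolding g_def h_def h1_def h3_def c_def x0_def y1_def y2_def z3_def by simp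
      qed
    qed
  qed
  also have "\<dots> = (\<integral>\<^sup>+ z. h z \<partial>glued)" by (rule nn_integral_glued[OF mh, symmetric])
  also have "\<dots> = (\<integral>\<^sup>+ z. h1 (fst z) \<partial>glued) + (\<integral>\<^sup>+ z. c \<partial>glued) + (\<integral>\<^sup>+ z. h3 (snd z) \<partial>glued)"
  proof -
    have a1: "(\<lambda>z. h1 (fst z)) \<in> borel_measurable glued" by (rule measurable_glued) (use mh1 in measurable)
    have a3: "(\<lambda>z. h3 (snd z)) \<in> borel_measurable glued" by (rule measurable_glued) (use mh3 in measurable)
    have a2: "(\<lambda>z. h1 (fst z) + c) \<in> borel_measurable glued"
      using a1 by (rule borel_measurable_add) simp
    have "(\<integral>\<^sup>+ z. h z \<partial>glued) = (\<integral>\<^sup>+ z. h1 (fst z) + c \<partial>glued) + (\<integral>\<^sup>+ z. h3 (snd z) \<partial>glued)"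
      unfolding h_def by (rule nn_integral_add[OF a2 a3])
    also have "(\<integral>\<^sup>+ z. h1 (fst z) + c \<partial>glued) = (\<integral>\<^sup>+ z. h1 (fst z) \<partial>glued) + (\<integral>\<^sup>+ z. c \<partial>glued)"
      by (rule nn_integral_add[OF a1]) simp
    finally show ?thesis .
  qed
  also have "(\<integral>\<^sup>+ z. h1 (fst z) \<partial>glued) = (\<integral>\<^sup>+ z. h1 z \<partial>\<pi>1)" by (rule nn_integral_glued_fst[OF mh1])
  also have "(\<integral>\<^sup>+ z. h3 (snd z) \<partial>glued) = (\<integral>\<^sup>+ z. h3 z \<partial>\<pi>2)" by (rule nn_integral_glued_snd[OF mh3])
  also have "(\<integral>\<^sup>+ z. c \<partial>glued) = c"
  proof -
    have "(\<integral>\<^sup>+ z. (\<lambda>_. c) (fst z) \<partial>glued) = (\<integral>\<^sup>+ z. c \<partial>\<pi>1)" by (rule nn_integral_glued_fst) simp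
    also have "\<dots> = c" using prob_space.emeasure_space_1[OF prob_space_\<pi>1] by simp
    finally show ?thesis by simp
  qed
  finally show ?thesis unfolding h1_def h3_def c_def .
qed

end
lemma near_optimal_coupling:
  fixes \<mu> \<nu> :: "'a::polish_space measure"
  assumes \<mu>: "\<mu> \<in> Pp p UNIV dist" and \<nu>: "\<nu> \<in> Pp p UNIV dist" and p: "0 < p" and \<eta>: "0 < \<eta>"
  obtains \<pi> where "\<pi> \<in> couplings UNIV dist \<mu> \<nu>"
    "(\<integral>\<^sup>+ z. ennreal (dist (fst z) (snd z) powr p) \<partial>\<pi>) \<le> ennreal ((wass p UNIV dist \<mu> \<nu> + \<eta>) powr p)"
proof -
  have "wass p UNIV dist \<mu> \<nu> powr p < (wass p UNIV dist \<mu> \<nu> + \<eta>) powr p"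
    using \<eta> p wass_nonneg[of p UNIV dist \<mu> \<nu>] by (intro powr_less_mono2) auto
  then have "wcost p UNIV dist \<mu> \<nu> < ennreal ((wass p UNIV dist \<mu> \<nu> + \<eta>) powr p)"
    using wass_nonneg[of p UNIV dist \<mu> \<nu>] by (simp add: wcost_eq_wass_powr[OF \<mu> \<nu> p] ennreal_less_iff)
  then show ?thesis using that unfolding wcost_def by (auto simp: INF_less_iff less_imp_le)
qed

lemma wass_triangle:
  fixes \<mu> \<nu> \<rho> :: "'a::polish_space measure"
  assumes \<mu>: "\<mu> \<in> Pp p UNIV dist" and \<nu>: "\<nu> \<in> Pp p UNIV dist" and \<rho>: "\<rho> \<in> Pp p UNIV dist"
    and p: "1 \<le> p"
  shows "wass p UNIV dist \<mu> \<rho> \<le> wass p UNIV dist \<mu> \<nu> + wass p UNIV dist \<nu> \<rho>"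
proof (rule field_le_epsilon)
  fix e :: real assume "0 < e"
  define \<eta> where "\<eta> = e / 3"
  have \<eta>: "0 < \<eta>" using \<open>0 < e\<close> by (simp add: \<eta>_def)
  txt \<open>The weights \<open>s i / S\<close> are proportional to the three legs \<open>\<mu> \<rightarrow> \<nu>\<close>, inside a cell,
    \<open>\<nu> \<rightarrow> \<rho>\<close>, which makes the weighted Jensen bound sum up to \<open>S\<^sup>p\<close>.\<close>
  define s :: "nat \<Rightarrow> real" where
    "s i = (if i = 0 then wass p UNIV dist \<mu> \<nu> + \<eta> else if i = 1 then \<eta> else wass p UNIV dist \<nu> \<rho> + \<eta>)" for i
  define S where "S = sum s {0, 1, 2}"
  define L where "L i = (s i / S) powr (1 - p)" for i
  have s: "0 < s i" for i
    using \<eta> wass_nonneg[of p UNIV dist \<mu> \<nu>] wass_nonneg[of p UNIV dist \<nu> \<rho>] by (simp add: s_def)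
  have S0: "0 < S" unfolding S_def using s by (intro sum_pos) auto
  have weights: "(\<Sum>i\<in>{0, 1, 2}. s i / S) = 1"
    using S0 by (simp only: sum_divide_distrib[symmetric] S_def[symmetric]) simp
  have S: "S = wass p UNIV dist \<mu> \<nu> + wass p UNIV dist \<nu> \<rho> + e" by (simp add: S_def s_def \<eta>_def)
  have L: "0 \<le> L i" for i by (simp add: L_def)
  obtain \<pi>1 where \<pi>1: "\<pi>1 \<in> couplings UNIV dist \<mu> \<nu>"
    and c1: "(\<integral>\<^sup>+ z. ennreal (dist (fst z) (snd z) powr p) \<partial>\<pi>1) \<le> ennreal (s 0 powr p)"
    using near_optimal_coupling[OF \<mu> \<nu> _ \<eta>] p by (auto simp: s_def)
  obtain \<pi>2 where \<pi>2: "\<pi>2 \<in> couplings UNIV dist \<nu> \<rho>"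
    and c2: "(\<integral>\<^sup>+ z. ennreal (dist (fst z) (snd z) powr p) \<partial>\<pi>2) \<le> ennreal (s 2 powr p)"
    using near_optimal_coupling[OF \<nu> \<rho> _ \<eta>] p by (auto simp: s_def)
  obtain B :: "nat \<Rightarrow> 'a set" where B: "\<And>k. B k \<in> sets borel" "disjoint_family B" "(\<Union>k. B k) = UNIV"
    and diam: "\<And>k y y'. y \<in> B k \<Longrightarrow> y' \<in> B k \<Longrightarrow> dist y y' \<le> \<eta>"
    using countable_partition_small_cells[OF \<eta>] by metis
  interpret G: gluing \<mu> \<nu> \<rho> \<pi>1 \<pi>2 B
    unfolding gluing_def using PpD(1)[OF \<mu>] \<pi>1 \<pi>2 B by blast
  have weighted: "(a + b + c) powr p \<le> L 0 * a powr p + L 1 * b powr p + L 2 * c powr p"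
    if "0 \<le> a" "0 \<le> b" "0 \<le> c" for a b c
  proof -
    define x :: "nat \<Rightarrow> real" where "x i = (if i = 0 then a else if i = 1 then b else c)" for i
    have "(\<Sum>i\<in>{0, 1, 2}. x i) powr p \<le> (\<Sum>i\<in>{0, 1, 2}. (s i / S) powr (1 - p) * x i powr p)"
      using that s S0 weights p by (intro powr_sum_le_weighted) (auto simp: x_def)
    then show ?thesis by (simp add: x_def L_def add.assoc)
  qed
  have cost_le: "(\<integral>\<^sup>+ z. ennreal (L i * dist (fst z) (snd z) powr p) \<partial>\<pi>) \<le> ennreal (L i * s j powr p)"
    if "\<pi> \<in> couplings UNIV dist \<sigma> \<tau>" "(\<integral>\<^sup>+ z. ennreal (dist (fst z) (snd z) powr p) \<partial>\<pi>) \<le> ennreal (s j powr p)"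
    for \<pi> and \<sigma> \<tau> :: "'a measure" and i j :: nat
  proof -
    have "(\<integral>\<^sup>+ z. ennreal (L i * dist (fst z) (snd z) powr p) \<partial>\<pi>)
        = ennreal (L i) * (\<integral>\<^sup>+ z. ennreal (dist (fst z) (snd z) powr p) \<partial>\<pi>)"
      using L[of i] by (simp add: ennreal_mult)
        (intro nn_integral_cmult measurable_coupling[OF that(1)], measurable)
    also have "\<dots> \<le> ennreal (L i * s j powr p)"
      using that(2) L[of i] by (simp add: ennreal_mult mult_left_mono)
    finally show ?thesis .
  qed
  have "wcost p UNIV dist \<mu> \<rho> \<le> (\<integral>\<^sup>+ z. ennreal (dist (fst z) (snd z) powr p) \<partial>G.composed)"
    unfolding wcost_def using G.composed_in_couplings by (rule INF_lower)
  also have "\<dots> \<le> (\<integral>\<^sup>+ z. ennreal (L 0 * dist (fst z) (snd z) powr p) \<partial>\<pi>1) + ennreal (L 1 * \<eta> powr p)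
      + (\<integral>\<^sup>+ z. ennreal (L 2 * dist (fst z) (snd z) powr p) \<partial>\<pi>2)"
    using p \<eta> diam L weighted by (intro G.composed_cost_le) auto
  also have "\<dots> \<le> ennreal (L 0 * s 0 powr p) + ennreal (L 1 * s 1 powr p) + ennreal (L 2 * s 2 powr p)"
    using cost_le[OF \<pi>1 c1] cost_le[OF \<pi>2 c2] by (simp add: s_def add_mono)
  also have "\<dots> = ennreal (S powr p)"
    using sum_weighted_powr_self[of "{0, 1, 2}" s p] s L unfolding S_def[symmetric]
    by (simp add: L_def add.assoc ennreal_plus[symmetric] del: ennreal_plus)
  finally have "wass_e p UNIV dist \<mu> \<rho> \<le> ereal S"
    using S0 p by (intro wass_e_le_ereal) auto
  then show "wass p UNIV dist \<mu> \<rho> \<le> wass p UNIV dist \<mu> \<nu> + wass p UNIV dist \<nu> \<rho> + e"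
    using p by (simp add: wass_e_eq_wass[OF \<mu> \<rho>] S)
qed

lemma Metric_space_wass:
  assumes "1 \<le> p"
  shows "Metric_space (Pp p UNIV dist) (wass p UNIV (dist :: 'a::polish_space \<Rightarrow> 'a \<Rightarrow> real))"
  using assms by unfold_locales (auto simp: wass_nonneg wass_commute wass_eq_0_iff wass_triangle)

section \<open>Dirac measures\<close>

context Metric_space
begin

lemma coupling_return_concentrated:
  assumes a: "a \<in> M" and b: "b \<in> M"
    and \<pi>: "\<pi> \<in> couplings M d (return (mborel M d) a) (return (mborel M d) b)"
  shows "AE z in \<pi>. z = (a, b)" "emeasure \<pi> (space \<pi>) = 1"
proof -
  define S where "S = mborel M d"
  have s: "sets \<pi> = sets (S \<Otimes>\<^sub>M S)" and d1: "distr \<pi> S fst = return S a"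
    and d2: "distr \<pi> S snd = return S b"
    using \<pi> unfolding couplings_def S_def by auto
  have spS: "space S = M" unfolding S_def by (rule space_mborel)
  have sp: "space \<pi> = M \<times> M"
    using sets_eq_imp_space_eq[OF s] by (simp add: space_pair_measure spS)
  have fm: "fst \<in> measurable \<pi> S" "snd \<in> measurable \<pi> S"
    by (subst measurable_cong_sets[OF s refl]; simp)+
  have Ma: "M - {a} \<in> sets S" "M - {b} \<in> sets S"
    using sets.Diff[OF sets.top singleton_mborel[OF a]] sets.Diff[OF sets.top singleton_mborel[OF b]]
    by (simp_all add: S_def space_mborel)
  have "fst -` (M - {a}) \<inter> space \<pi> = (M - {a}) \<times> M" "snd -` (M - {b}) \<inter> space \<pi> = M \<times> (M - {b})"
    using sp by auto
  then have "emeasure \<pi> ((M - {a}) \<times> M) = emeasure (distr \<pi> S fst) (M - {a})"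
    "emeasure \<pi> (M \<times> (M - {b})) = emeasure (distr \<pi> S snd) (M - {b})"
    using emeasure_distr[OF fm(1) Ma(1)] emeasure_distr[OF fm(2) Ma(2)] by simp_all
  moreover have "(M - {a}) \<times> M \<in> sets \<pi>" "M \<times> (M - {b}) \<in> sets \<pi>"
    unfolding s using Ma sets.top[of S] spS by auto
  ultimately have "(M - {a}) \<times> M \<union> M \<times> (M - {b}) \<in> null_sets \<pi>"
    using Ma by (intro null_sets.Un) (simp_all add: null_sets_def d1 d2)
  then show "AE z in \<pi>. z = (a, b)"
    by (rule AE_I') (auto simp: sp)
  have "fst -` M \<inter> space \<pi> = space \<pi>" using sp by auto
  then have "emeasure \<pi> (space \<pi>) = emeasure (distr \<pi> S fst) M"
    using emeasure_distr[OF fm(1), of M] sets.top[of S] by (simp add: spS)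
  then show "emeasure \<pi> (space \<pi>) = 1" using a sets.top[of S] spS by (simp add: d1)
qed

lemma wcost_return:
  assumes a: "a \<in> M" and b: "b \<in> M"
  shows "wcost p M d (return (mborel M d) a) (return (mborel M d) b) = ennreal (d a b powr p)"
proof -
  define S where "S = mborel M d"
  have cost: "(\<integral>\<^sup>+ z. ennreal (d (fst z) (snd z) powr p) \<partial>\<pi>) = ennreal (d a b powr p)"
    if \<pi>: "\<pi> \<in> couplings M d (return S a) (return S b)" for \<pi>
  proof -
    have "(\<integral>\<^sup>+ z. ennreal (d (fst z) (snd z) powr p) \<partial>\<pi>) = (\<integral>\<^sup>+ z. ennreal (d a b powr p) \<partial>\<pi>)"
      using coupling_return_concentrated(1)[OF a b \<pi>[unfolded S_def]]
      by (intro nn_integral_cong_AE) auto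
    then show ?thesis using coupling_return_concentrated(2)[OF a b \<pi>[unfolded S_def]] by simp
  qed
  have ab: "(a, b) \<in> space (S \<Otimes>\<^sub>M S)" using a b by (simp add: space_pair_measure S_def space_mborel)
  have "return (S \<Otimes>\<^sub>M S) (a, b) \<in> couplings M d (return S a) (return S b)"
    using distr_return[OF measurable_fst ab] distr_return[OF measurable_snd ab]
    unfolding couplings_def S_def by simp
  then show ?thesis
    unfolding S_def[symmetric] wcost_def using cost by (intro antisym INF_lower2 INF_greatest) auto
qed

lemma wass_e_return:
  assumes "a \<in> M" "b \<in> M" "0 < p"
  shows "wass_e p M d (return (mborel M d) a) (return (mborel M d) b) = ereal (d a b)"
  using assms by (simp add: wass_e_def wcost_return powr_powr)

end

lemma return_in_Pp: "return borel x \<in> Pp p UNIV (dist :: 'a::polish_space \<Rightarrow> 'a \<Rightarrow> real)"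
proof -
  have "(\<integral>\<^sup>+ y. ennreal (dist x y powr p) \<partial>return borel x) = ennreal (dist x x powr p)"
    by (rule nn_integral_return) simp_all
  then show ?thesis unfolding Pp_def mborel_UNIV by (auto intro!: prob_space_return exI[of _ x])
qed

lemma wass_return:
  fixes x y :: "'a::metric_space"
  shows "0 < p \<Longrightarrow> wass p UNIV dist (return borel x) (return borel y) = dist x y"
  using Met_TC.wass_e_return[of x y p] by (simp add: wass_def mborel_UNIV)

lemma Pp_singleton_type:
  fixes \<mu> \<nu> :: "'a::metric_space measure"
  assumes "\<And>x y::'a. x = y" and \<mu>: "\<mu> \<in> Pp p UNIV dist" and \<nu>: "\<nu> \<in> Pp p UNIV dist"
  shows "\<mu> = \<nu>"
proof (rule measure_eqI)
  interpret M: prob_space \<mu> by (rule PpD(1)[OF \<mu>])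
  interpret N: prob_space \<nu> by (rule PpD(1)[OF \<nu>])
  show "sets \<mu> = sets \<nu>" using PpD(2)[OF \<mu>] PpD(2)[OF \<nu>] by simp
  fix A assume "A \<in> sets \<mu>"
  have "A = {} \<or> A = UNIV"
  proof (cases "A = {}")
    case False
    then show ?thesis using assms(1) by (metis (full_types) UNIV_eq_I ex_in_conv)
  qed simp
  then show "emeasure \<mu> A = emeasure \<nu> A"
    using M.emeasure_space_1 N.emeasure_space_1 PpD(3)[OF \<mu>] PpD(3)[OF \<nu>] by auto
qed

section \<open>Lipschitz walks and curvature\<close>

lemma wcost_distr_le_coupling:
  fixes \<mu> \<nu> :: "'a::polish_space measure" and T :: "'a \<Rightarrow> 'b"
  assumes T: "T \<in> measurable borel (mborel N e)" and \<pi>: "\<pi> \<in> couplings UNIV dist \<mu> \<nu>"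
    and K: "0 \<le> K" and p: "0 < p"
    and lip: "\<And>x y. e (T x) (T y) \<le> K * dist x y" and nonneg: "\<And>x y. 0 \<le> e (T x) (T y)"
  shows "wcost p N e (distr \<mu> (mborel N e) T) (distr \<nu> (mborel N e) T)
    \<le> ennreal (K powr p) * (\<integral>\<^sup>+ z. ennreal (dist (fst z) (snd z) powr p) \<partial>\<pi>)"
proof -
  define S where "S = mborel N e"
  define TT where "TT z = (T (fst z), T (snd z))" for z :: "'a \<times> 'a"
  have fm: "fst \<in> measurable \<pi> borel" "snd \<in> measurable \<pi> borel"
    by (rule measurable_coupling[OF \<pi>], simp)+
  have TT: "TT \<in> measurable \<pi> (S \<Otimes>\<^sub>M S)"
    unfolding TT_def S_def using T fm by measurable
  have "distr (distr \<pi> (S \<Otimes>\<^sub>M S) TT) S fst = distr \<mu> S T"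
    using distr_distr[OF _ TT, of fst S] distr_distr[OF T[folded S_def] fm(1)] couplingsD(4)[OF \<pi>]
    by (simp add: TT_def comp_def)
  moreover have "distr (distr \<pi> (S \<Otimes>\<^sub>M S) TT) S snd = distr \<nu> S T"
    using distr_distr[OF _ TT, of snd S] distr_distr[OF T[folded S_def] fm(2)] couplingsD(5)[OF \<pi>]
    by (simp add: TT_def comp_def)
  ultimately have "distr \<pi> (S \<Otimes>\<^sub>M S) TT \<in> couplings N e (distr \<mu> S T) (distr \<nu> S T)"
    by (simp add: couplings_def S_def)
  then have "wcost p N e (distr \<mu> S T) (distr \<nu> S T)
      \<le> (\<integral>\<^sup>+ z. ennreal (e (fst z) (snd z) powr p) \<partial>distr \<pi> (S \<Otimes>\<^sub>M S) TT)"
    unfolding wcost_def by (rule INF_lower)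
  also have "\<dots> \<le> (\<integral>\<^sup>+ z. ennreal (e (T (fst z)) (T (snd z)) powr p) \<partial>\<pi>)"
    using nn_integral_distr_le[OF TT, of "\<lambda>z. ennreal (e (fst z) (snd z) powr p)"] by (simp add: TT_def)
  also have "\<dots> \<le> (\<integral>\<^sup>+ z. ennreal (K powr p) * ennreal (dist (fst z) (snd z) powr p) \<partial>\<pi>)"
  proof (rule nn_integral_mono)
    fix z :: "'a \<times> 'a"
    have "e (T (fst z)) (T (snd z)) powr p \<le> (K * dist (fst z) (snd z)) powr p"
      using p lip nonneg by (intro powr_mono2) auto
    also have "\<dots> = K powr p * dist (fst z) (snd z) powr p" using K by (simp add: powr_mult)
    finally show "ennreal (e (T (fst z)) (T (snd z)) powr p)
        \<le> ennreal (K powr p) * ennreal (dist (fst z) (snd z) powr p)"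
      by (simp add: ennreal_mult[symmetric] ennreal_leI)
  qed
  also have "\<dots> = ennreal (K powr p) * (\<integral>\<^sup>+ z. ennreal (dist (fst z) (snd z) powr p) \<partial>\<pi>)"
    by (rule nn_integral_cmult) (rule measurable_coupling[OF \<pi>], measurable)
  finally show ?thesis unfolding S_def .
qed

lemma wass_e_distr_le:
  fixes \<mu> \<nu> :: "'a::polish_space measure" and T :: "'a \<Rightarrow> 'b"
  assumes T: "T \<in> measurable borel (mborel N e)"
    and \<mu>: "\<mu> \<in> Pp p UNIV dist" and \<nu>: "\<nu> \<in> Pp p UNIV dist" and K: "0 \<le> K" and p: "0 < p"
    and lip: "\<And>x y. e (T x) (T y) \<le> K * dist x y" and nonneg: "\<And>x y. 0 \<le> e (T x) (T y)"
  shows "wass_e p N e (distr \<mu> (mborel N e) T) (distr \<nu> (mborel N e) T) \<le> ereal (K * wass p UNIV dist \<mu> \<nu>)"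
proof (rule ereal_le_epsilon2)
  fix \<epsilon> :: real assume "0 < \<epsilon>"
  define W where "W = wass p UNIV dist \<mu> \<nu>"
  define \<eta> where "\<eta> = \<epsilon> / (K + 1)"
  have \<eta>: "0 < \<eta>" "K * \<eta> \<le> \<epsilon>"
    using \<open>0 < \<epsilon>\<close> K by (auto simp: \<eta>_def field_simps)
  have W: "0 \<le> W" by (simp add: W_def wass_nonneg)
  obtain \<pi> where \<pi>: "\<pi> \<in> couplings UNIV dist \<mu> \<nu>"
    and c: "(\<integral>\<^sup>+ z. ennreal (dist (fst z) (snd z) powr p) \<partial>\<pi>) \<le> ennreal ((W + \<eta>) powr p)"
    using near_optimal_coupling[OF \<mu> \<nu> p \<eta>(1)] unfolding W_def by blast
  have "wcost p N e (distr \<mu> (mborel N e) T) (distr \<nu> (mborel N e) T) \<le> ennreal (K powr p) * ennreal ((W + \<eta>) powr p)"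
    using wcost_distr_le_coupling[OF T \<pi> K p lip nonneg] c by (simp add: order_trans mult_left_mono)
  also have "\<dots> = ennreal ((K * (W + \<eta>)) powr p)"
    using K W \<eta> by (simp add: powr_mult ennreal_mult)
  finally have "wass_e p N e (distr \<mu> (mborel N e) T) (distr \<nu> (mborel N e) T) \<le> ereal (K * (W + \<eta>))"
    using K W \<eta> p by (intro wass_e_le_ereal) auto
  also have "\<dots> \<le> ereal (K * W) + ereal \<epsilon>" using \<eta> by (simp add: distrib_left)
  finally show "wass_e p N e (distr \<mu> (mborel N e) T) (distr \<nu> (mborel N e) T) \<le> ereal (K * W) + ereal \<epsilon>" .
qed

lemma kappa_eq_ereal:
  assumes "wass_e p M d (m x) (m y) = ereal w" "0 < d x y"
  shows "kappa p M d m x y = ereal (1 - w / d x y)"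
  using assms by (simp add: kappa_def one_ereal_def)

lemma ereal_le_kappa_iff:
  assumes "wass_e p M d (m x) (m y) = ereal w" "0 < d x y"
  shows "ereal l \<le> kappa p M d m x y \<longleftrightarrow> w \<le> (1 - l) * d x y"
proof -
  have "l \<le> 1 - w / d x y \<longleftrightarrow> w / d x y \<le> 1 - l" by linarith
  then show ?thesis using assms by (simp add: kappa_eq_ereal pos_divide_le_eq)
qed

context
  fixes p :: real and m :: "'a::polish_space \<Rightarrow> 'a measure"
  assumes p: "1 \<le> p"
    and walk: "\<And>x. m x \<in> Pp p UNIV dist"
    and meas: "m \<in> measurable borel (mborel (Pp p UNIV dist) (wass p UNIV dist))"
begin

abbreviation "PP \<equiv> Pp p UNIV (dist :: 'a \<Rightarrow> 'a \<Rightarrow> real)"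
abbreviation "WW \<equiv> wass p UNIV (dist :: 'a \<Rightarrow> 'a \<Rightarrow> real)"

lemma lift_walk_prob_space:
  assumes "\<mu> \<in> PP"
  shows "prob_space (lift_walk p m \<mu>) \<and> sets (lift_walk p m \<mu>) = sets (mborel PP WW)"
proof -
  have "m \<in> measurable \<mu> (mborel PP WW)"
    by (subst measurable_cong_sets[OF PpD(2)[OF assms] refl]) (rule meas)
  then show ?thesis
    unfolding lift_walk_def using prob_space.prob_space_distr[OF PpD(1)[OF assms]] by simp
qed

lemma kappa_lift_walk_return:
  assumes "x \<noteq> y"
  shows "kappa p PP WW (lift_walk p m) (return borel x) (return borel y) = kappa p UNIV dist m x y"
proof -
  have "lift_walk p m (return borel z) = return (mborel PP WW) (m z)" for z
    unfolding lift_walk_def by (rule distr_return[OF meas]) simp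
  moreover have "wass_e p PP WW (return (mborel PP WW) (m x)) (return (mborel PP WW) (m y)) = ereal (WW (m x) (m y))"
    using p by (intro Metric_space.wass_e_return[OF Metric_space_wass walk walk]) auto
  moreover have "WW (return borel x) (return borel y) = dist x y" using p by (simp add: wass_return)
  ultimately show ?thesis using assms p by (simp add: kappa_eq_ereal wass_e_eq_wass[OF walk walk])
qed

lemma kappa_lift_walk_ge:
  assumes k: "\<And>x y. x \<noteq> y \<Longrightarrow> k \<le> kappa p UNIV dist m x y"
    and \<mu>: "\<mu> \<in> PP" and \<nu>: "\<nu> \<in> PP" and "\<mu> \<noteq> \<nu>"
  shows "k \<le> kappa p PP WW (lift_walk p m) \<mu> \<nu>"
proof -
  obtain x0 y0 :: 'a where "x0 \<noteq> y0" using Pp_singleton_type[OF _ \<mu> \<nu>] \<open>\<mu> \<noteq> \<nu>\<close> by blast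
  have kappa_X: "kappa p UNIV dist m x y = ereal (1 - WW (m x) (m y) / dist x y)" if "x \<noteq> y" for x y
    using that p by (intro kappa_eq_ereal wass_e_eq_wass[OF walk walk]) auto
  show ?thesis
  proof (cases k)
    case PInf
    then show ?thesis using k[OF \<open>x0 \<noteq> y0\<close>] kappa_X[OF \<open>x0 \<noteq> y0\<close>] by simp
  next
    case (real l)
    have lip: "WW (m x) (m y) \<le> (1 - l) * dist x y" for x y
    proof (cases "x = y")
      case True
      then show ?thesis using wass_self[OF PpD(2)[OF walk]] by simp
    next
      case False
      then show ?thesis
        using k[OF False] real p by (simp add: ereal_le_kappa_iff wass_e_eq_wass[OF walk walk])
    qed
    have K: "0 \<le> 1 - l"
      using lip[of x0 y0] wass_nonneg[of p UNIV dist "m x0" "m y0"] \<open>x0 \<noteq> y0\<close>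
      by (metis dual_order.trans zero_less_dist_iff zero_le_mult_iff not_le)
    have W: "0 < WW \<mu> \<nu>"
      using wass_eq_0_iff[OF \<mu> \<nu>] wass_nonneg[of p UNIV dist \<mu> \<nu>] \<open>\<mu> \<noteq> \<nu>\<close> p by force
    have lifted: "wass_e p PP WW (lift_walk p m \<mu>) (lift_walk p m \<nu>) \<le> ereal ((1 - l) * WW \<mu> \<nu>)"
      unfolding lift_walk_def using meas \<mu> \<nu> K p lip wass_nonneg
      by (intro wass_e_distr_le) auto
    then obtain t where t: "wass_e p PP WW (lift_walk p m \<mu>) (lift_walk p m \<nu>) = ereal t"
      by (cases "wass_e p PP WW (lift_walk p m \<mu>) (lift_walk p m \<nu>)") (auto simp: wass_e_def split: if_splits)
    then show ?thesis using lifted W real by (simp add: ereal_le_kappa_iff)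
  qed simp
qed

end

theorem theorem1p2:
  fixes p :: real and m :: "'a::polish_space \<Rightarrow> 'a measure"
  assumes p: "1 \<le> p"
    and walk: "\<And>x. m x \<in> Pp p UNIV dist"
    and meas: "m \<in> measurable borel (mborel (Pp p UNIV dist) (wass p UNIV dist))"
  shows "(\<forall>\<mu>\<in>Pp p UNIV dist.
            prob_space (lift_walk p m \<mu>) \<and>
            sets (lift_walk p m \<mu>) = sets (mborel (Pp p UNIV dist) (wass p UNIV dist)))
      \<and> (INF xy\<in>{(x, y). x \<noteq> y}. kappa p UNIV dist m (fst xy) (snd xy))
        = (INF \<mu>\<nu>\<in>{(\<mu>, \<nu>). \<mu> \<in> Pp p UNIV dist \<and> \<nu> \<in> Pp p UNIV dist \<and> \<mu> \<noteq> \<nu>}.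
             kappa p (Pp p UNIV dist) (wass p UNIV dist) (lift_walk p m) (fst \<mu>\<nu>) (snd \<mu>\<nu>))"
    (is "_ \<and> ?L = ?R")
proof
  show "\<forall>\<mu>\<in>Pp p UNIV dist. prob_space (lift_walk p m \<mu>) \<and>
      sets (lift_walk p m \<mu>) = sets (mborel (Pp p UNIV dist) (wass p UNIV dist))"
    using lift_walk_prob_space[OF p walk meas] by blast
  have "?R \<le> kappa p UNIV dist m x y" if "x \<noteq> y" for x y
  proof -
    have "return borel x \<noteq> return borel y"
      using wass_return[of p x y] wass_self[of "return borel x" p] that p by auto
    then have "?R \<le> kappa p (Pp p UNIV dist) (wass p UNIV dist) (lift_walk p m) (return borel x) (return borel y)"
      by (intro INF_lower2[of "(return borel x, return borel y)"]) (auto simp: return_in_Pp)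
    then show ?thesis using kappa_lift_walk_return[OF p walk meas that] by simp
  qed
  moreover have "?L \<le> kappa p UNIV dist m x y" if "x \<noteq> y" for x y
    using that by (intro INF_lower2[of "(x, y)"]) auto
  then have "?L \<le> kappa p (Pp p UNIV dist) (wass p UNIV dist) (lift_walk p m) \<mu> \<nu>"
    if "\<mu> \<in> Pp p UNIV dist" "\<nu> \<in> Pp p UNIV dist" "\<mu> \<noteq> \<nu>" for \<mu> \<nu>
    using that by (intro kappa_lift_walk_ge[OF p walk meas])
  ultimately show "?L = ?R" by (intro antisym INF_greatest) auto
qed

end
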